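(* Let $(G_n)_{n\in\mathbb N}$ be a sequence of groups, let $A$ be a finite subset of $\mathbb N$, and let $(P_n)_{n\in\mathbb N}$ be a partition of $\mathbb N\setminus A$ into finite sets. Then $\mathcal A(G_n)\cong\mathcal A( *_{i\in P_n}G_i)$, the archipelago group of the sequence $( *_{i\in P_n}G_i)_{n\in\mathbb N}$.
   Context: For a sequence of groups $(G_n)_{n\in\mathbb N}$, an infinite word is a map $w:L\to\bigsqcup_n (G_n\setminus\{1\})$ from a countable linearly ordered set $L$ such that $w^{-1}(G_n)$ is finite for every $n$. Two infinite words are equivalent if for every $m$ their restrictions to the letters from $G_1,\dots,G_m$ represent the same element of $G_1*\cdots*G_m$. The topologist's product $\circledast_n G_n$ is the group of equivalence classes, with multiplication induced by concatenation and inversion by reversing the order and inverting each letter. The free product $*_n G_n$ is the subgroup of classes of finite words. The archipelago group is $\mathcal A(G_n):=\circledast_n G_n/\langle\langle *_n G_n\rangle\rangle$ (quotient by normal closure). *)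

theory Defs
  imports Complex_Main "HOL-Algebra.Group" "HOL-Algebra.Coset"
begin

definition valid_letter :: "(nat \<Rightarrow> ('a, 'b) monoid_scheme) \<Rightarrow> nat \<times> 'a \<Rightarrow> bool" where
  "valid_letter G l \<longleftrightarrow> snd l \<in> carrier (G (fst l)) \<and> snd l \<noteq> \<one>\<^bsub>G (fst l)\<^esub>"

definition valid_word :: "(nat \<Rightarrow> ('a, 'b) monoid_scheme) \<Rightarrow> (nat \<times> 'a) list \<Rightarrow> bool" where
  "valid_word G xs \<longleftrightarrow> (\<forall>l \<in> set xs. valid_letter G l)"

inductive red_step :: "(nat \<Rightarrow> ('a, 'b) monoid_scheme) \<Rightarrow> (nat \<times> 'a) list \<Rightarrow> (nat \<times> 'a) list \<Rightarrow> bool"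
  for G where
  merge: "\<lbrakk> valid_word G ws; valid_word G us; valid_letter G (i, a); valid_letter G (i, b);
            a \<otimes>\<^bsub>G i\<^esub> b \<noteq> \<one>\<^bsub>G i\<^esub> \<rbrakk>
          \<Longrightarrow> red_step G (ws @ (i, a) # (i, b) # us) (ws @ (i, a \<otimes>\<^bsub>G i\<^esub> b) # us)"
| cancel: "\<lbrakk> valid_word G ws; valid_word G us; valid_letter G (i, a); valid_letter G (i, b);
            a \<otimes>\<^bsub>G i\<^esub> b = \<one>\<^bsub>G i\<^esub> \<rbrakk>
          \<Longrightarrow> red_step G (ws @ (i, a) # (i, b) # us) (ws @ us)"

definition free_equiv :: "(nat \<Rightarrow> ('a, 'b) monoid_scheme) \<Rightarrow> (nat \<times> 'a) list \<Rightarrow> (nat \<times> 'a) list \<Rightarrow> bool" where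
  "free_equiv G = (sup (red_step G) (red_step G)\<inverse>\<inverse>)\<^sup>*\<^sup>*"

definition words_over :: "nat set \<Rightarrow> (nat \<Rightarrow> ('a, 'b) monoid_scheme) \<Rightarrow> (nat \<times> 'a) list set" where
  "words_over I G = {xs. valid_word G xs \<and> (\<forall>l \<in> set xs. fst l \<in> I)}"

definition fw_class :: "nat set \<Rightarrow> (nat \<Rightarrow> ('a, 'b) monoid_scheme) \<Rightarrow> (nat \<times> 'a) list \<Rightarrow> (nat \<times> 'a) list set" where
  "fw_class I G xs = {ys \<in> words_over I G. free_equiv G xs ys}"

definition free_prod :: "nat set \<Rightarrow> (nat \<Rightarrow> ('a, 'b) monoid_scheme) \<Rightarrow> ((nat \<times> 'a) list set) monoid" where
  "free_prod I G = \<lparr> carrier = fw_class I G ` words_over I G,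
     mult = (\<lambda>U V. fw_class I G ((SOME x. x \<in> U) @ (SOME y. y \<in> V))),
     one = fw_class I G [] \<rparr>"

text \<open>Every countable linear order embeds into the rationals, so an infinite word is
  represented as a partial map from rat to letters; its domain is the index order L.\<close>

definition is_inf_word :: "(nat \<Rightarrow> ('a, 'b) monoid_scheme) \<Rightarrow> (rat \<Rightarrow> (nat \<times> 'a) option) \<Rightarrow> bool" where
  "is_inf_word G w \<longleftrightarrow> (\<forall>q l. w q = Some l \<longrightarrow> valid_letter G l)
      \<and> (\<forall>n. finite {q. \<exists>l. w q = Some l \<and> fst l = n})"

definition proj :: "nat \<Rightarrow> (rat \<Rightarrow> (nat \<times> 'a) option) \<Rightarrow> (nat \<times> 'a) list" where
  "proj m w = map (the \<circ> w) (sorted_list_of_set {q. \<exists>l. w q = Some l \<and> fst l < m})"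

definition inf_equiv :: "(nat \<Rightarrow> ('a, 'b) monoid_scheme) \<Rightarrow> (rat \<Rightarrow> (nat \<times> 'a) option) \<Rightarrow> (rat \<Rightarrow> (nat \<times> 'a) option) \<Rightarrow> bool" where
  "inf_equiv G w v \<longleftrightarrow> (\<forall>m. free_equiv G (proj m w) (proj m v))"

definition iw_class :: "(nat \<Rightarrow> ('a, 'b) monoid_scheme) \<Rightarrow> (rat \<Rightarrow> (nat \<times> 'a) option) \<Rightarrow> (rat \<Rightarrow> (nat \<times> 'a) option) set" where
  "iw_class G w = {v. is_inf_word G v \<and> inf_equiv G w v}"

text \<open>Order embedding of rat onto the rationals in (-1,1), used for concatenation.\<close>

definition emb :: "rat \<Rightarrow> rat" where
  "emb q = q / (1 + \<bar>q\<bar>)"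

definition concat_word :: "(rat \<Rightarrow> 'c option) \<Rightarrow> (rat \<Rightarrow> 'c option) \<Rightarrow> rat \<Rightarrow> 'c option" where
  "concat_word w v q =
     (if q + 1 \<in> range emb then w (inv_into UNIV emb (q + 1))
      else if q - 1 \<in> range emb then v (inv_into UNIV emb (q - 1))
      else None)"

definition top_prod :: "(nat \<Rightarrow> ('a, 'b) monoid_scheme) \<Rightarrow> ((rat \<Rightarrow> (nat \<times> 'a) option) set) monoid" where
  "top_prod G = \<lparr> carrier = iw_class G ` {w. is_inf_word G w},
     mult = (\<lambda>U V. iw_class G (concat_word (SOME x. x \<in> U) (SOME y. y \<in> V))),
     one = iw_class G (\<lambda>_. None) \<rparr>"

text \<open>The free product as the subgroup of classes of finite words.\<close>

definition free_prod_sub :: "(nat \<Rightarrow> ('a, 'b) monoid_scheme) \<Rightarrow> (rat \<Rightarrow> (nat \<times> 'a) option) set set" where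
  "free_prod_sub G = iw_class G ` {w. is_inf_word G w \<and> finite {q. w q \<noteq> None}}"

definition normal_closure :: "('c, 'd) monoid_scheme \<Rightarrow> 'c set \<Rightarrow> 'c set" where
  "normal_closure H S = \<Inter>{N. N \<lhd> H \<and> S \<subseteq> N}"

definition archipelago :: "(nat \<Rightarrow> ('a, 'b) monoid_scheme) \<Rightarrow> ((rat \<Rightarrow> (nat \<times> 'a) option) set set) monoid" where
  "archipelago G = top_prod G Mod normal_closure (top_prod G) (free_prod_sub G)"

end

theory Submission
  imports Defs "HOL-Library.Product_Lexorder" "HOL-Library.Countable"
begin

text \<open>Collapse an infinite word over \<open>(G\<^sub>i)\<close> by deleting its letters from \<open>A\<close> and replacing
  each remaining letter \<open>g \<in> G\<^sub>i\<close>, \<open>i \<in> P\<^sub>n\<close>, by the letter \<open>[g]\<close> of the free product of the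
  \<open>G\<^sub>i\<close>, \<open>i \<in> P\<^sub>n\<close>; expand an infinite word over these blocks by replacing each letter with a
  word representing it, the new letters being indexed by the lexicographic order on \<open>\<rat> \<times> \<nat>\<close>,
  which embeds into \<open>\<rat>\<close>.
  Because \<open>A\<close> and every \<open>P\<^sub>n\<close> are finite, each finite projection of the image is computed
  from a single finite projection of the original word, so both maps respect equivalence and
  induce homomorphisms of topologist's products which preserve the free products.
  Collapsing an expanded word gives it back, while expanding a collapsed word only deletes the
  finitely many letters from \<open>A\<close>, which changes its class by an element of the normal closure of
  the free product. Hence the normal closure for \<open>(G\<^sub>i)\<close> is the full preimage of the normal
  closure for the blocks under the surjective collapse homomorphism, and the quotients are
  isomorphic.\<close>

lemma sorted_list_of_set_eqI:
  fixes l :: "'a::linorder list"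
  assumes "sorted_wrt (<) l" "set l = S"
  shows "sorted_list_of_set S = l"
  using assms strict_sorted_equal[of l "sorted_list_of_set S"]
  by (auto simp: sorted_list_of_set.strict_sorted_key_list_of_set)

lemma sorted_list_of_set_image_strict_mono:
  fixes h :: "'a::linorder \<Rightarrow> 'b::linorder"
  assumes "strict_mono h" "finite S"
  shows "sorted_list_of_set (h ` S) = map h (sorted_list_of_set S)"
proof (rule sorted_list_of_set_eqI)
  show "sorted_wrt (<) (map h (sorted_list_of_set S))"
    unfolding sorted_wrt_map
    by (rule sorted_wrt_mono_rel[rotated, OF sorted_list_of_set.strict_sorted_key_list_of_set[of S]])
       (simp add: strict_monoD assms(1))
qed (use assms in simp)

lemma sorted_list_of_set_filter:
  fixes S :: "'a::linorder set"
  assumes "finite S"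
  shows "sorted_list_of_set {x\<in>S. P x} = filter P (sorted_list_of_set S)"
proof (rule sorted_list_of_set_eqI)
  show "sorted_wrt (<) (filter P (sorted_list_of_set S))"
    using sorted_list_of_set.strict_sorted_key_list_of_set[of S] sorted_wrt_filter by blast
qed (use assms in auto)

lemma sorted_list_of_set_Un_ordered:
  fixes S T :: "'a::linorder set"
  assumes "finite S" "finite T" "\<And>x y. x \<in> S \<Longrightarrow> y \<in> T \<Longrightarrow> x < y"
  shows "sorted_list_of_set (S \<union> T) = sorted_list_of_set S @ sorted_list_of_set T"
proof (rule sorted_list_of_set_eqI)
  show "sorted_wrt (<) (sorted_list_of_set S @ sorted_list_of_set T)"
    using assms sorted_list_of_set.strict_sorted_key_list_of_set[of S]
      sorted_list_of_set.strict_sorted_key_list_of_set[of T]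
    by (simp add: sorted_wrt_append)
qed (use assms in auto)

lemma sorted_list_of_set_uminus:
  fixes S :: "'a::linordered_ab_group_add set"
  assumes "finite S"
  shows "sorted_list_of_set (uminus ` S) = rev (map uminus (sorted_list_of_set S))"
proof (rule sorted_list_of_set_eqI)
  have "sorted_wrt (<) (sorted_list_of_set S)"
    by (simp add: sorted_list_of_set.strict_sorted_key_list_of_set)
  then show "sorted_wrt (<) (rev (map uminus (sorted_list_of_set S)))"
    by (simp add: sorted_wrt_rev sorted_wrt_map)
qed (use assms in simp)

lemma sorted_wrt_concat_pairs:
  fixes l :: "'a::linorder list"
  assumes "sorted_wrt (<) l"
  shows "sorted_wrt (<) (concat (map (\<lambda>q. map (Pair q) [0..<f q]) l))"
  using assms
proof (induction l)
  case (Cons a l)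
  have "sorted_wrt (<) (map (Pair a) [0..<f a])"
    by (simp add: sorted_wrt_map less_prod_def' sorted_wrt_upt)
  moreover have "x < y"
    if "x \<in> set (map (Pair a) [0..<f a])" "y \<in> set (concat (map (\<lambda>q. map (Pair q) [0..<f q]) l))"
    for x y
    using that Cons.prems by (auto simp: less_prod_def')
  moreover have "sorted_wrt (<) l" using Cons.prems by simp
  ultimately show ?case
    using Cons.IH by (simp add: sorted_wrt_append del: sorted_wrt.simps)
qed simp

lemma sorted_list_of_set_pairs:
  fixes S :: "'a::linorder set" and f :: "'a \<Rightarrow> nat"
  assumes "finite S"
  shows "sorted_list_of_set {(q,j). q \<in> S \<and> j < f q}
     = concat (map (\<lambda>q. map (Pair q) [0..<f q]) (sorted_list_of_set S))"
  by (rule sorted_list_of_set_eqI, rule sorted_wrt_concat_pairs)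
     (use assms in \<open>auto simp: sorted_list_of_set.strict_sorted_key_list_of_set\<close>)

lemma finite_pairs_below:
  fixes f :: "'c \<Rightarrow> nat"
  assumes "finite S"
  shows "finite {(q,j). q \<in> S \<and> j < f q}"
proof (rule finite_subset)
  show "{(q,j). q \<in> S \<and> j < f q} \<subseteq> (\<Union>q\<in>S. {q} \<times> {..<f q})" by auto
qed (use assms in auto)

section \<open>Countable linear orders embed into the rationals\<close>

lemma rat_between_finite_sets:
  fixes lo hi :: "rat set"
  assumes "finite lo" "finite hi" "\<And>a b. a \<in> lo \<Longrightarrow> b \<in> hi \<Longrightarrow> a < b"
  obtains c where "\<forall>a\<in>lo. a < c" "\<forall>b\<in>hi. c < b"
proof (cases "lo = {} \<or> hi = {}")
  case True
  have "\<forall>a\<in>lo. a < Max lo + 1" "\<forall>b\<in>hi. Min hi - 1 < b"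
    using Max_ge[OF assms(1)] Min_le[OF assms(2)] by force+
  then show ?thesis
    using True that[of "Max lo + 1"] that[of "Min hi - 1"] by blast
next
  case False
  then have lt: "Max lo < Min hi" using assms by auto
  have "\<forall>a\<in>lo. a < (Max lo + Min hi) / 2" "\<forall>b\<in>hi. (Max lo + Min hi) / 2 < b"
    using Max_ge[OF assms(1)] Min_le[OF assms(2)] lt by force+
  then show ?thesis by (rule that)
qed

text \<open>The forth half of Cantor's back-and-forth argument: following an enumeration \<open>e\<close>,
  each new element is sent to a rational lying strictly between the images of its
  predecessors below and above it.\<close>

definition rat_choice :: "(nat \<Rightarrow> 'a::linorder) \<Rightarrow> rat list \<Rightarrow> nat \<Rightarrow> rat" where
  "rat_choice e ls n = (SOME c. \<forall>k<length ls. (e k < e n \<longrightarrow> ls!k < c) \<and> (e n < e k \<longrightarrow> c < ls!k))"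

fun rat_images :: "(nat \<Rightarrow> 'a::linorder) \<Rightarrow> nat \<Rightarrow> rat list" where
  "rat_images e 0 = []"
| "rat_images e (Suc n) = rat_images e n @ [rat_choice e (rat_images e n) n]"

lemma length_rat_images [simp]: "length (rat_images e n) = n"
  by (induction n) auto

lemma rat_images_prefix: "n \<le> m \<Longrightarrow> k < n \<Longrightarrow> rat_images e m ! k = rat_images e n ! k"
  by (induction m) (auto simp: nth_append le_Suc_eq)

lemma rat_choice_between:
  assumes "\<forall>k<n. \<forall>k'<n. e k < e k' \<longrightarrow> rat_images e n ! k < rat_images e n ! k'"
  shows "\<forall>k<n. (e k < e n \<longrightarrow> rat_images e n ! k < rat_choice e (rat_images e n) n)
                \<and> (e n < e k \<longrightarrow> rat_choice e (rat_images e n) n < rat_images e n ! k)"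
proof -
  let ?lo = "{rat_images e n ! k |k. k < n \<and> e k < e n}"
  let ?hi = "{rat_images e n ! k |k. k < n \<and> e n < e k}"
  obtain c where c: "\<forall>a\<in>?lo. a < c" "\<forall>b\<in>?hi. c < b"
  proof (rule rat_between_finite_sets)
    fix a b assume "a \<in> ?lo" "b \<in> ?hi"
    then show "a < b" using assms less_trans by blast
  qed auto
  then have "\<forall>k<n. (e k < e n \<longrightarrow> rat_images e n ! k < c) \<and> (e n < e k \<longrightarrow> c < rat_images e n ! k)"
    by blast
  then show ?thesis
    unfolding rat_choice_def length_rat_images by (rule someI)
qed

lemma rat_images_strict_mono:
  "\<forall>k<n. \<forall>k'<n. e k < e k' \<longrightarrow> rat_images e n ! k < rat_images e n ! k'"
proof (induction n)
  case (Suc n)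
  then show ?case
    using rat_choice_between[OF Suc.IH]
    by (auto simp: nth_append less_Suc_eq dest: order.asym)
qed simp

lemma countable_linorder_embeds_into_rat: "\<exists>f :: 'a::{countable,linorder} \<Rightarrow> rat. strict_mono f"
proof -
  define e :: "nat \<Rightarrow> 'a" where "e = from_nat"
  let ?f = "\<lambda>x :: 'a. rat_images e (Suc (to_nat x)) ! to_nat x"
  have "strict_mono ?f"
  proof (rule strict_monoI)
    fix x y :: 'a assume "x < y"
    let ?n = "Suc (max (to_nat x) (to_nat y))"
    have "rat_images e ?n ! to_nat x < rat_images e ?n ! to_nat y"
      by (rule rat_images_strict_mono[rule_format]) (use \<open>x < y\<close> in \<open>auto simp: e_def\<close>)
    then show "?f x < ?f y"
      using rat_images_prefix[of "Suc (to_nat x)" ?n _ e] rat_images_prefix[of "Suc (to_nat y)" ?n _ e]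
      by (simp del: rat_images.simps)
  qed
  then show ?thesis by blast
qed

definition rat_pair_emb :: "rat \<times> nat \<Rightarrow> rat" where
  "rat_pair_emb = (SOME f. strict_mono f)"

lemma strict_mono_rat_pair_emb: "strict_mono rat_pair_emb"
  unfolding rat_pair_emb_def by (rule someI_ex[OF countable_linorder_embeds_into_rat])

lemma inj_rat_pair_emb: "inj rat_pair_emb"
  using strict_mono_rat_pair_emb strict_mono_imp_inj_on by blast


type_synonym 'a word = "(nat \<times> 'a) list"
type_synonym 'a iword = "rat \<Rightarrow> (nat \<times> 'a) option"
type_synonym 'a block_letter = "nat \<times> 'a word set"
type_synonym 'a block_word = "'a block_letter list"
type_synonym 'a block_iword = "rat \<Rightarrow> 'a block_letter option"

lemma valid_word_simps[simp]:
  "valid_word G [] = True"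
  "valid_word G (l # xs) = (valid_letter G l \<and> valid_word G xs)"
  "valid_word G (xs @ ys) = (valid_word G xs \<and> valid_word G ys)"
  by (auto simp: valid_word_def)

lemma red_step_valid_word:
  assumes "red_step G x y" "\<And>i. group (G i)"
  shows "valid_word G x \<and> valid_word G y"
  using assms(1)
proof cases
  case (merge ws us i a b)
  have "a \<otimes>\<^bsub>G i\<^esub> b \<in> carrier (G i)"
    using merge assms(2)[of i] by (simp add: valid_letter_def group.is_monoid monoid.m_closed)
  then show ?thesis using merge by (simp add: valid_letter_def)
qed auto

lemma free_equiv_refl[simp]: "free_equiv G x x"
  by (simp add: free_equiv_def)

lemma free_equiv_stepI: "red_step G x y \<Longrightarrow> free_equiv G x y"
  by (simp add: free_equiv_def r_into_rtranclp)

lemma free_equiv_trans: "free_equiv G x y \<Longrightarrow> free_equiv G y z \<Longrightarrow> free_equiv G x z"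
  unfolding free_equiv_def by (rule rtranclp_trans)

lemma free_equiv_sym: "free_equiv G x y \<Longrightarrow> free_equiv G y x"
  unfolding free_equiv_def
proof (induction rule: rtranclp_induct)
  case (step y z)
  then have "(sup (red_step G) (red_step G)\<inverse>\<inverse>) z y" by auto
  then show ?case using step.IH by (rule converse_rtranclp_into_rtranclp)
qed simp

lemma equivp_free_equiv: "equivp (free_equiv G)"
  by (rule equivpI) (auto simp: reflp_def symp_def transp_def intro: free_equiv_sym free_equiv_trans)

lemma free_equiv_map:
  assumes "free_equiv G x y" "equivp R" "\<And>y z. red_step G y z \<Longrightarrow> R (f y) (f z)"
  shows "R (f x) (f y)"
  using assms(1) unfolding free_equiv_def
proof (induction rule: rtranclp_induct)
  case base
  then show ?case using assms(2) by (rule equivp_reflp)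
next
  case (step y z)
  then have "R (f y) (f z)" using assms(2,3) by (auto intro: equivp_symp)
  then show ?case using step.IH assms(2) by (blast intro: equivp_transp)
qed

lemma free_equiv_valid_word:
  assumes "free_equiv G x y" "\<And>i. group (G i)"
  shows "valid_word G x = valid_word G y"
  using assms(1) identity_equivp
  by (rule free_equiv_map) (metis red_step_valid_word assms(2))

lemma red_step_context:
  assumes "red_step G x y" "valid_word G u" "valid_word G v"
  shows "red_step G (u @ x @ v) (u @ y @ v)"
  using assms(1)
proof cases
  case (merge ws us i a b)
  have "red_step G ((u @ ws) @ (i, a) # (i, b) # (us @ v)) ((u @ ws) @ (i, a \<otimes>\<^bsub>G i\<^esub> b) # (us @ v))"
    by (rule red_step.merge) (use merge assms in auto)
  then show ?thesis using merge by simp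
next
  case (cancel ws us i a b)
  have "red_step G ((u @ ws) @ (i, a) # (i, b) # (us @ v)) ((u @ ws) @ (us @ v))"
    by (rule red_step.cancel) (use cancel assms in auto)
  then show ?thesis using cancel by simp
qed

lemma free_equiv_context:
  assumes "free_equiv G x y" "valid_word G u" "valid_word G v"
  shows "free_equiv G (u @ x @ v) (u @ y @ v)"
  using assms(1) equivp_free_equiv
  by (rule free_equiv_map) (use red_step_context[OF _ assms(2,3)] free_equiv_stepI in blast)

lemma free_equiv_append:
  assumes "free_equiv G x x'" "free_equiv G y y'" "valid_word G x" "valid_word G y"
    and "\<And>i. group (G i)"
  shows "free_equiv G (x @ y) (x' @ y')"
proof -
  have "free_equiv G ([] @ x @ y) ([] @ x' @ y)"
    by (rule free_equiv_context[OF assms(1)]) (simp_all add: assms(4))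
  moreover have "free_equiv G (x' @ y @ []) (x' @ y' @ [])"
    by (rule free_equiv_context[OF assms(2)])
       (use free_equiv_valid_word[OF assms(1,5)] assms(3) in simp_all)
  ultimately show ?thesis by (simp add: free_equiv_trans)
qed

lemma red_step_filter:
  assumes "red_step G x y"
  shows "free_equiv G (filter (\<lambda>l. Q (fst l)) x) (filter (\<lambda>l. Q (fst l)) y)"
  using assms
proof cases
  case (merge ws us i a b)
  then have "Q i \<Longrightarrow> red_step G (filter (\<lambda>l. Q (fst l)) ws @ (i, a) # (i, b) # filter (\<lambda>l. Q (fst l)) us)
       (filter (\<lambda>l. Q (fst l)) ws @ (i, a \<otimes>\<^bsub>G i\<^esub> b) # filter (\<lambda>l. Q (fst l)) us)"
    by (intro red_step.merge) (auto simp: valid_word_def)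
  then show ?thesis using merge by (auto simp: free_equiv_stepI)
next
  case (cancel ws us i a b)
  then have "Q i \<Longrightarrow> red_step G (filter (\<lambda>l. Q (fst l)) ws @ (i, a) # (i, b) # filter (\<lambda>l. Q (fst l)) us)
       (filter (\<lambda>l. Q (fst l)) ws @ filter (\<lambda>l. Q (fst l)) us)"
    by (intro red_step.cancel) (auto simp: valid_word_def)
  then show ?thesis using cancel by (auto simp: free_equiv_stepI)
qed

lemma free_equiv_filter:
  assumes "free_equiv G x y"
  shows "free_equiv G (filter (\<lambda>l. Q (fst l)) x) (filter (\<lambda>l. Q (fst l)) y)"
  using assms equivp_free_equiv by (rule free_equiv_map) (rule red_step_filter)

definition letter_word :: "(nat \<Rightarrow> ('a, 'b) monoid_scheme) \<Rightarrow> nat \<Rightarrow> 'a \<Rightarrow> 'a word" where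
  "letter_word G n a = (if a = \<one>\<^bsub>G n\<^esub> then [] else [(n, a)])"

lemma free_equiv_letter_word_append:
  assumes "group (G n)" "a \<in> carrier (G n)" "valid_letter G (n, b)"
  shows "free_equiv G (letter_word G n a @ [(n, b)]) (letter_word G n (a \<otimes>\<^bsub>G n\<^esub> b))"
proof (cases "a = \<one>\<^bsub>G n\<^esub>")
  case True
  then show ?thesis
    using assms(3) by (simp add: letter_word_def valid_letter_def group.is_monoid[OF assms(1)] monoid.l_one)
next
  case False
  then have va: "valid_letter G (n, a)" using assms(2) by (simp add: valid_letter_def)
  show ?thesis
  proof (cases "a \<otimes>\<^bsub>G n\<^esub> b = \<one>\<^bsub>G n\<^esub>")
    case True
    have "red_step G ([] @ (n, a) # (n, b) # []) ([] @ [])"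
      by (rule red_step.cancel) (use va assms(3) True in simp_all)
    then show ?thesis using False True by (simp add: letter_word_def free_equiv_stepI)
  next
    case no_cancel: False
    have "red_step G ([] @ (n, a) # (n, b) # []) ([] @ (n, a \<otimes>\<^bsub>G n\<^esub> b) # [])"
      by (rule red_step.merge) (use va assms(3) no_cancel in simp_all)
    then show ?thesis using False no_cancel by (simp add: letter_word_def free_equiv_stepI)
  qed
qed

section \<open>Retraction onto one factor\<close>

definition word_eval :: "(nat \<Rightarrow> ('a, 'b) monoid_scheme) \<Rightarrow> nat \<Rightarrow> 'a word \<Rightarrow> 'a" where
  "word_eval G i xs = foldr (\<lambda>l acc. if fst l = i then snd l \<otimes>\<^bsub>G i\<^esub> acc else acc) xs \<one>\<^bsub>G i\<^esub>"

lemma word_eval_simps[simp]: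
  "word_eval G i [] = \<one>\<^bsub>G i\<^esub>"
  "word_eval G i (l # xs) = (if fst l = i then snd l \<otimes>\<^bsub>G i\<^esub> word_eval G i xs else word_eval G i xs)"
  by (simp_all add: word_eval_def)

lemma word_eval_closed:
  assumes "valid_word G xs" "group (G i)"
  shows "word_eval G i xs \<in> carrier (G i)"
  using assms(1)
  by (induction xs) (auto simp: valid_letter_def group.is_monoid[OF assms(2)] monoid.m_closed)

lemma word_eval_append:
  assumes "valid_word G xs" "valid_word G ys" "group (G i)"
  shows "word_eval G i (xs @ ys) = word_eval G i xs \<otimes>\<^bsub>G i\<^esub> word_eval G i ys"
  using assms(1)
proof (induction xs)
  case Nil then show ?case using word_eval_closed[OF assms(2,3)] group.is_monoid[OF assms(3)]
    by (simp add: monoid.l_one)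
next
  case (Cons l xs)
  then show ?case
    using word_eval_closed[of G xs i] word_eval_closed[of G ys i] assms group.is_monoid[OF assms(3)]
    by (auto simp: valid_letter_def monoid.m_assoc)
qed

lemma red_step_word_eval:
  assumes "red_step G x y" "\<And>i. group (G i)"
  shows "word_eval G j x = word_eval G j y"
  using assms(1)
proof cases
  case (merge ws us i a b)
  have m: "monoid (G i)" using assms(2) group.is_monoid by blast
  have "word_eval G j [(i,a),(i,b)] = word_eval G j [(i, a \<otimes>\<^bsub>G i\<^esub> b)]"
    using merge m by (cases "i = j") (auto simp: valid_letter_def monoid.r_one monoid.m_closed)
  moreover have "word_eval G j ((i,a) # (i,b) # us) = word_eval G j [(i,a),(i,b)] \<otimes>\<^bsub>G j\<^esub> word_eval G j us"
    using word_eval_append[of G "[(i,a),(i,b)]" us j] merge assms(2) by simp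
  moreover have "word_eval G j ((i,a \<otimes>\<^bsub>G i\<^esub> b) # us) = word_eval G j [(i, a \<otimes>\<^bsub>G i\<^esub> b)] \<otimes>\<^bsub>G j\<^esub> word_eval G j us"
    using word_eval_append[of G "[(i, a \<otimes>\<^bsub>G i\<^esub> b)]" us j] merge assms(2) m
    by (simp add: valid_letter_def monoid.m_closed)
  moreover have "valid_word G ((i,a) # (i,b) # us)" "valid_word G ((i,a \<otimes>\<^bsub>G i\<^esub> b) # us)"
    using merge m by (auto simp: valid_letter_def monoid.m_closed)
  ultimately show ?thesis using merge word_eval_append[OF _ _ assms(2)] by simp
next
  case (cancel ws us i a b)
  have m: "monoid (G i)" using assms(2) group.is_monoid by blast
  have "word_eval G j ((i,a) # (i,b) # us) = word_eval G j [(i,a),(i,b)] \<otimes>\<^bsub>G j\<^esub> word_eval G j us"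
    using word_eval_append[of G "[(i,a),(i,b)]" us j] cancel assms(2) by simp
  moreover have "word_eval G j [(i,a),(i,b)] = \<one>\<^bsub>G j\<^esub>"
    using cancel m by (auto simp: valid_letter_def monoid.r_one monoid.m_assoc[symmetric])
  moreover have "valid_word G ((i,a) # (i,b) # us)" using cancel by auto
  ultimately show ?thesis using cancel word_eval_append[OF _ _ assms(2)] assms(2)[of j]
    word_eval_closed[of G us j] by (simp add: group.is_monoid monoid.l_one)
qed

lemma free_equiv_word_eval:
  assumes "free_equiv G x y" "\<And>i. group (G i)"
  shows "word_eval G j x = word_eval G j y"
  using assms(1) identity_equivp by (rule free_equiv_map) (use red_step_word_eval[OF _ assms(2)] in auto)

lemma single_letter_not_free_equiv_Nil:
  assumes "valid_letter G l" "\<And>i. group (G i)"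
  shows "\<not> free_equiv G [l] []"
proof
  assume "free_equiv G [l] []"
  then have "word_eval G (fst l) [l] = word_eval G (fst l) []" using free_equiv_word_eval assms(2) by blast
  then show False using assms(1) assms(2)[of "fst l"]
    by (simp add: valid_letter_def group.is_monoid monoid.r_one)
qed

definition inv_letter :: "(nat \<Rightarrow> ('a, 'b) monoid_scheme) \<Rightarrow> nat \<times> 'a \<Rightarrow> nat \<times> 'a" where
  "inv_letter G l = (fst l, inv\<^bsub>G (fst l)\<^esub> snd l)"

definition inv_word where "inv_word G xs = rev (map (inv_letter G) xs)"

lemma inv_letter_valid:
  assumes "valid_letter G l" "group (G (fst l))"
  shows "valid_letter G (inv_letter G l)"
  using assms by (auto simp: valid_letter_def inv_letter_def group.inv_eq_1_iff)

lemma inv_word_valid: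
  assumes "valid_word G xs" "\<And>i. group (G i)"
  shows "valid_word G (inv_word G xs)"
  using assms by (auto simp: valid_word_def inv_word_def intro!: inv_letter_valid)

lemma inv_word_cancel:
  assumes "valid_word G xs" "\<And>i. group (G i)"
  shows "free_equiv G (inv_word G xs @ xs) []"
  using assms(1)
proof (induction xs)
  case (Cons l xs)
  obtain i a where l: "l = (i,a)" by fastforce
  have g: "group (G i)" using assms(2) .
  have va: "valid_letter G (i,a)" using Cons l by simp
  then have vi: "valid_letter G (i, inv\<^bsub>G i\<^esub> a)"
    using inv_letter_valid[of G "(i,a)"] g by (simp add: inv_letter_def)
  have "red_step G (inv_word G xs @ (i, inv\<^bsub>G i\<^esub> a) # (i, a) # xs) (inv_word G xs @ xs)"
    by (rule red_step.cancel)
       (use Cons va vi g inv_word_valid[of G xs, OF _ assms(2)] in \<open>auto simp: valid_letter_def group.l_inv\<close>)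
  then have "free_equiv G (inv_word G (l # xs) @ l # xs) (inv_word G xs @ xs)"
    by (simp add: inv_word_def inv_letter_def l free_equiv_stepI)
  then show ?case using Cons free_equiv_trans by auto
qed (simp add: inv_word_def)

section \<open>Free products\<close>

lemma words_over_valid: "xs \<in> words_over I G \<Longrightarrow> valid_word G xs"
  by (simp add: words_over_def)

lemma fw_class_self: "xs \<in> words_over I G \<Longrightarrow> xs \<in> fw_class I G xs"
  by (simp add: fw_class_def)

lemma fw_class_eq:
  assumes "y \<in> fw_class I G x"
  shows "fw_class I G y = fw_class I G x"
  using assms unfolding fw_class_def by (auto intro: free_equiv_trans free_equiv_sym)

lemma fw_class_eqI:
  assumes "free_equiv G x y"
  shows "fw_class I G x = fw_class I G y"
  using assms unfolding fw_class_def by (auto intro: free_equiv_trans free_equiv_sym)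

lemma fw_class_eqD:
  assumes "fw_class I G x = fw_class I G y" "x \<in> words_over I G"
  shows "free_equiv G x y"
proof -
  have "x \<in> fw_class I G y" using assms fw_class_self by blast
  then show ?thesis by (simp add: fw_class_def free_equiv_sym)
qed

lemma words_over_append: "x \<in> words_over I G \<Longrightarrow> y \<in> words_over I G \<Longrightarrow> x @ y \<in> words_over I G"
  by (auto simp: words_over_def)

lemma some_in_fw_class:
  assumes "x \<in> words_over I G"
  shows "(SOME y. y \<in> fw_class I G x) \<in> fw_class I G x"
  using fw_class_self[OF assms] by (rule someI)

lemma fw_class_some:
  assumes "x \<in> words_over I G"
  defines "y \<equiv> SOME y. y \<in> fw_class I G x"
  shows "y \<in> words_over I G" "free_equiv G x y"
  using some_in_fw_class[OF assms(1)] unfolding y_def fw_class_def by auto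

lemma free_prod_mult:
  assumes "x \<in> words_over I G" "y \<in> words_over I G" "\<And>i. group (G i)"
  shows "fw_class I G x \<otimes>\<^bsub>free_prod I G\<^esub> fw_class I G y = fw_class I G (x @ y)"
proof -
  let ?x = "SOME z. z \<in> fw_class I G x" and ?y = "SOME z. z \<in> fw_class I G y"
  have "free_equiv G ?x x" "free_equiv G ?y y" using fw_class_some assms free_equiv_sym by blast+
  moreover have "valid_word G ?x" "valid_word G ?y" using fw_class_some(1) assms words_over_valid by blast+
  ultimately have "free_equiv G (?x @ ?y) (x @ y)" using free_equiv_append assms(3) by blast
  then show ?thesis by (simp add: free_prod_def fw_class_eqI)
qed

lemma free_prod_carrier: "carrier (free_prod I G) = fw_class I G ` words_over I G"
  by (simp add: free_prod_def)

lemma free_prod_one: "\<one>\<^bsub>free_prod I G\<^esub> = fw_class I G []"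
  by (simp add: free_prod_def)

lemma nil_words_over[simp]: "[] \<in> words_over I G"
  by (simp add: words_over_def valid_word_def)

lemma inv_word_words_over:
  assumes "x \<in> words_over I G" "\<And>i. group (G i)"
  shows "inv_word G x \<in> words_over I G"
  using assms inv_word_valid[of G x]
  by (auto simp: words_over_def inv_word_def inv_letter_def)

lemma group_free_prod:
  assumes grp: "\<And>i. group (G i)"
  shows "group (free_prod I G)"
proof (rule groupI)
  fix U V assume "U \<in> carrier (free_prod I G)" "V \<in> carrier (free_prod I G)"
  then obtain x y where xy: "x \<in> words_over I G" "y \<in> words_over I G" "U = fw_class I G x" "V = fw_class I G y"
    by (auto simp: free_prod_carrier)
  then show "U \<otimes>\<^bsub>free_prod I G\<^esub> V \<in> carrier (free_prod I G)"
    using free_prod_mult[OF xy(1,2) grp] words_over_append[OF xy(1,2)] by (auto simp: free_prod_carrier)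
next
  show "\<one>\<^bsub>free_prod I G\<^esub> \<in> carrier (free_prod I G)" by (auto simp: free_prod_carrier free_prod_one)
next
  fix U V W assume "U \<in> carrier (free_prod I G)" "V \<in> carrier (free_prod I G)" "W \<in> carrier (free_prod I G)"
  then obtain x y z where xyz: "x \<in> words_over I G" "y \<in> words_over I G" "z \<in> words_over I G"
    "U = fw_class I G x" "V = fw_class I G y" "W = fw_class I G z"
    by (auto simp: free_prod_carrier)
  have "U \<otimes>\<^bsub>free_prod I G\<^esub> V \<otimes>\<^bsub>free_prod I G\<^esub> W = fw_class I G ((x @ y) @ z)"
    using xyz free_prod_mult[OF xyz(1,2) grp] free_prod_mult[OF words_over_append[OF xyz(1,2)] xyz(3) grp] by simp
  moreover have "U \<otimes>\<^bsub>free_prod I G\<^esub> (V \<otimes>\<^bsub>free_prod I G\<^esub> W) = fw_class I G (x @ (y @ z))"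
    using xyz free_prod_mult[OF xyz(2,3) grp] free_prod_mult[OF xyz(1) words_over_append[OF xyz(2,3)] grp] by simp
  ultimately show "U \<otimes>\<^bsub>free_prod I G\<^esub> V \<otimes>\<^bsub>free_prod I G\<^esub> W = U \<otimes>\<^bsub>free_prod I G\<^esub> (V \<otimes>\<^bsub>free_prod I G\<^esub> W)"
    by simp
next
  fix U assume "U \<in> carrier (free_prod I G)"
  then obtain x where "x \<in> words_over I G" "U = fw_class I G x" by (auto simp: free_prod_carrier)
  then show "\<one>\<^bsub>free_prod I G\<^esub> \<otimes>\<^bsub>free_prod I G\<^esub> U = U"
    using free_prod_mult[where G=G, OF _ _ grp] by (simp add: free_prod_one)
next
  fix U assume "U \<in> carrier (free_prod I G)"
  then obtain x where x: "x \<in> words_over I G" "U = fw_class I G x" by (auto simp: free_prod_carrier)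
  have ix: "inv_word G x \<in> words_over I G" using inv_word_words_over x grp by blast
  have "fw_class I G (inv_word G x) \<otimes>\<^bsub>free_prod I G\<^esub> U = fw_class I G []"
    using free_prod_mult[OF ix x(1) grp] inv_word_cancel[OF words_over_valid[OF x(1)] grp] x(2)
    by (simp add: fw_class_eqI)
  then show "\<exists>V\<in>carrier (free_prod I G). V \<otimes>\<^bsub>free_prod I G\<^esub> U = \<one>\<^bsub>free_prod I G\<^esub>"
    using ix by (auto simp: free_prod_carrier free_prod_one)
qed


definition positions :: "nat \<Rightarrow> 'a iword \<Rightarrow> rat set" where
  "positions m w = {q. \<exists>l. w q = Some l \<and> fst l < m}"

lemma inf_word_valid_letter: "is_inf_word G w \<Longrightarrow> w q = Some l \<Longrightarrow> valid_letter G l"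
  unfolding is_inf_word_def by blast

lemma inf_word_finite_index: "is_inf_word G w \<Longrightarrow> finite {q. \<exists>l. w q = Some l \<and> fst l = n}"
  unfolding is_inf_word_def by blast

lemma is_inf_wordI:
  assumes "\<And>q l. w q = Some l \<Longrightarrow> valid_letter G l"
    and "\<And>n. finite {q. \<exists>l. w q = Some l \<and> fst l = n}"
  shows "is_inf_word G w"
  using assms unfolding is_inf_word_def by blast

lemma proj_positions: "proj m w = map (the \<circ> w) (sorted_list_of_set (positions m w))"
  by (simp add: proj_def positions_def)

lemma finite_positions:
  assumes "is_inf_word G w"
  shows "finite (positions m w)"
proof -
  have "positions m w = (\<Union>n<m. {q. \<exists>l. w q = Some l \<and> fst l = n})" by (auto simp: positions_def)
  then show ?thesis using inf_word_finite_index[OF assms] by simp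
qed

lemma proj_valid:
  assumes "is_inf_word G w"
  shows "valid_word G (proj m w)"
proof -
  have "valid_letter G (the (w q))" if qp: "q \<in> positions m w" for q
  proof -
    obtain l where "w q = Some l" using qp unfolding positions_def by blast
    then show ?thesis using inf_word_valid_letter[OF assms] by simp
  qed
  then show ?thesis unfolding valid_word_def proj_positions using finite_positions[OF assms, of m] by auto
qed

lemma proj_filter_positions:
  assumes "finite (positions K w)"
  shows "map (the \<circ> w) (sorted_list_of_set {q \<in> positions K w. C (the (w q))}) = filter C (proj K w)"
  using assms by (simp add: sorted_list_of_set_filter proj_positions filter_map comp_def)

lemma positions_le:
  assumes "m \<le> K"
  shows "positions m w = {q \<in> positions K w. fst (the (w q)) < m}"
  using assms by (auto simp: positions_def)

lemma proj_le:
  assumes "is_inf_word G w" "m \<le> K"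
  shows "proj m w = filter (\<lambda>l. fst l < m) (proj K w)"
  using proj_filter_positions[OF finite_positions[OF assms(1)], where C = "\<lambda>l. fst l < m"] positions_le[OF assms(2), of w]
  by (simp add: proj_positions)

lemma emb_abs_less_one: "\<bar>emb q\<bar> < 1"
  by (auto simp: emb_def abs_if divide_less_eq field_simps)

lemma strict_mono_emb: "strict_mono emb"
proof (rule strict_monoI)
  fix q r :: rat assume "q < r"
  have d1: "1 + \<bar>q\<bar> > 0" "1 + \<bar>r\<bar> > 0" by (simp_all add: add_pos_nonneg)
  have "q * (1 + \<bar>r\<bar>) < r * (1 + \<bar>q\<bar>)"
  proof (cases "q \<ge> 0")
    case True then show ?thesis using \<open>q < r\<close> by (simp add: algebra_simps)
  next
    case False
    show ?thesis
    proof (cases "r \<ge> 0")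
      case True
      have a: "q * (1 + r) < 0" using False True by (simp add: mult_neg_pos add_pos_nonneg)
      have b: "r * (1 - q) \<ge> 0" using False True by simp
      have e: "q * (1 + \<bar>r\<bar>) = q*(1+r)" "r*(1+\<bar>q\<bar>) = r*(1-q)" using False True by simp_all
      show ?thesis unfolding e using a b by linarith
    next
      case F2: False
      then show ?thesis using False \<open>q < r\<close> by (simp add: algebra_simps)
    qed
  qed
  then show "emb q < emb r" unfolding emb_def using d1 by (simp add: divide_less_eq less_divide_eq field_simps)
qed

lemma inj_emb: "inj emb"
  using strict_mono_emb strict_mono_imp_inj_on by blast

lemma emb_inv[simp]: "inv_into UNIV emb (emb r) = r"
  by (simp add: inj_emb)

lemma concat_word_left[simp]: "concat_word w v (emb r - 1) = w r"
  by (simp add: concat_word_def)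

lemma concat_word_right[simp]: "concat_word w v (emb r + 1) = v r"
proof -
  have "emb r + 1 + 1 \<noteq> emb x" for x using emb_abs_less_one[of r] emb_abs_less_one[of x] by (simp add: abs_less_iff)
  then have "emb r + 1 + 1 \<notin> range emb" by blast
  then show ?thesis by (simp add: concat_word_def)
qed

lemma concat_word_cases:
  "concat_word w v p \<noteq> None \<Longrightarrow> (\<exists>r. p = emb r - 1) \<or> (\<exists>r. p = emb r + 1)"
proof -
  assume a: "concat_word w v p \<noteq> None"
  show ?thesis
  proof (cases "p + 1 \<in> range emb")
    case True
    then obtain r where "p + 1 = emb r" by blast
    then have "p = emb r - 1" by (simp add: algebra_simps)
    then show ?thesis by blast
  next
    case False
    then have "p - 1 \<in> range emb" using a by (auto simp: concat_word_def split: if_splits)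
    then obtain r where "p - 1 = emb r" by blast
    then have "p = emb r + 1" by (simp add: algebra_simps)
    then show ?thesis by blast
  qed
qed

lemma strict_mono_shift: "strict_mono (\<lambda>r. emb r + c)"
  using strict_mono_emb by (simp add: strict_mono_def)

lemma positions_concat_word:
  "positions m (concat_word w v) = (\<lambda>r. emb r - 1) ` positions m w \<union> (\<lambda>r. emb r + 1) ` positions m v"
proof (rule equalityI; rule subsetI)
  fix p assume p: "p \<in> positions m (concat_word w v)"
  then obtain l where l: "concat_word w v p = Some l" "fst l < m" by (auto simp: positions_def)
  have "concat_word w v p \<noteq> None" using l(1) by simp
  then consider r where "p = emb r - 1" | r where "p = emb r + 1" using concat_word_cases[of w v p] by blast
  then show "p \<in> (\<lambda>r. emb r - 1) ` positions m w \<union> (\<lambda>r. emb r + 1) ` positions m v"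
  proof cases
    case (1 r)
    then have "r \<in> positions m w" using l unfolding positions_def by (intro CollectI exI[of _ l] conjI) simp_all
    then show ?thesis using 1 by blast
  next
    case (2 r)
    then have "r \<in> positions m v" using l unfolding positions_def by (intro CollectI exI[of _ l] conjI) simp_all
    then show ?thesis using 2 by blast
  qed
next
  fix p assume "p \<in> (\<lambda>r. emb r - 1) ` positions m w \<union> (\<lambda>r. emb r + 1) ` positions m v"
  then consider r where "p = emb r - 1" "r \<in> positions m w" | r where "p = emb r + 1" "r \<in> positions m v" by blast
  then show "p \<in> positions m (concat_word w v)"
    by cases (simp_all add: positions_def)
qed

lemma proj_concat_word:
  assumes "is_inf_word G w" "is_inf_word G v"
  shows "proj m (concat_word w v) = proj m w @ proj m v"
proof -
  have f: "finite (positions m w)" "finite (positions m v)" using finite_positions assms by blast+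
  have sm1: "strict_mono (\<lambda>r. emb r + (-1))" and sm2: "strict_mono (\<lambda>r. emb r + 1)"
    using strict_mono_shift by blast+
  have lt: "x < y" if xy: "x \<in> (\<lambda>r. emb r - 1) ` positions m w" "y \<in> (\<lambda>r. emb r + 1) ` positions m v" for x y
  proof -
    obtain r s where "x = emb r - 1" "y = emb s + 1" using xy by blast
    then show ?thesis using emb_abs_less_one[of r] emb_abs_less_one[of s] by (simp add: abs_less_iff)
  qed
  have "sorted_list_of_set (positions m (concat_word w v))
     = map (\<lambda>r. emb r - 1) (sorted_list_of_set (positions m w)) @ map (\<lambda>r. emb r + 1) (sorted_list_of_set (positions m v))"
    unfolding positions_concat_word using sorted_list_of_set_Un_ordered[OF finite_imageI[OF f(1)] finite_imageI[OF f(2)] lt]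
      sorted_list_of_set_image_strict_mono[OF sm1 f(1)] sorted_list_of_set_image_strict_mono[OF sm2 f(2)] by simp
  then show ?thesis by (simp add: proj_positions comp_def)
qed

lemma concat_word_inf_word:
  assumes "is_inf_word G w" "is_inf_word G v"
  shows "is_inf_word G (concat_word w v)"
proof -
  have "valid_letter G l" if pl: "concat_word w v p = Some l" for p l
  proof -
    from pl have "concat_word w v p \<noteq> None" by simp
    then consider r where "p = emb r - 1" | r where "p = emb r + 1" using concat_word_cases[of w v p] by blast
    then show ?thesis
    proof cases
      case (1 r) then have "w r = Some l" using pl by simp
      then show ?thesis by (rule inf_word_valid_letter[OF assms(1)])
    next
      case (2 r) then have "v r = Some l" using pl by simp
      then show ?thesis by (rule inf_word_valid_letter[OF assms(2)])
    qed
  qed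
  moreover have "finite {q. \<exists>l. concat_word w v q = Some l \<and> fst l = n}" for n
  proof -
    have "{q. \<exists>l. concat_word w v q = Some l \<and> fst l = n} \<subseteq> positions (Suc n) (concat_word w v)"
      by (auto simp: positions_def)
    moreover have "finite (positions (Suc n) (concat_word w v))"
      unfolding positions_concat_word using finite_positions[OF assms(1)] finite_positions[OF assms(2)] by simp
    ultimately show ?thesis by (rule finite_subset)
  qed
  ultimately show ?thesis by (rule is_inf_wordI)
qed

definition inv_iword :: "(nat \<Rightarrow> ('a, 'b) monoid_scheme) \<Rightarrow> 'a iword \<Rightarrow> 'a iword" where
  "inv_iword G w q = map_option (inv_letter G) (w (-q))"

lemma positions_inv_iword: "positions m (inv_iword G w) = uminus ` positions m w"
  by (auto simp: positions_def inv_iword_def inv_letter_def image_def) (metis minus_minus)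

lemma proj_inv_iword:
  assumes "is_inf_word G w"
  shows "proj m (inv_iword G w) = inv_word G (proj m w)"
  using finite_positions[OF assms, of m]
  by (simp add: proj_positions positions_inv_iword sorted_list_of_set_uminus inv_word_def rev_map comp_def inv_iword_def option.map_sel
       flip: rev_map)
     (auto simp: positions_def intro!: map_cong option.map_sel)

lemma inv_iword_inf_word:
  assumes "is_inf_word G w" "\<And>i. group (G i)"
  shows "is_inf_word G (inv_iword G w)"
proof -
  have "valid_letter G l" if "inv_iword G w p = Some l" for p l
  proof -
    define l' where "l' = the (w (-p))"
    have l': "w (-p) = Some l'" "l = inv_letter G l'" using that by (auto simp: inv_iword_def l'_def)
    then show ?thesis using inv_letter_valid[OF inf_word_valid_letter[OF assms(1) l'(1)] assms(2)] by simp
  qed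
  moreover have "finite {q. \<exists>l. inv_iword G w q = Some l \<and> fst l = n}" for n
  proof -
    have "{q. \<exists>l. inv_iword G w q = Some l \<and> fst l = n} \<subseteq> positions (Suc n) (inv_iword G w)"
      by (auto simp: positions_def)
    moreover have "finite (positions (Suc n) (inv_iword G w))"
      unfolding positions_inv_iword using finite_positions assms by blast
    ultimately show ?thesis by (rule finite_subset)
  qed
  ultimately show ?thesis by (rule is_inf_wordI)
qed

lemma empty_inf_word[simp]: "is_inf_word G (\<lambda>_. None)"
  by (simp add: is_inf_word_def)

lemma proj_empty[simp]: "proj m (\<lambda>_. None) = []"
  by (simp add: proj_def)

section \<open>The topologist's product\<close>

lemma inf_equiv_refl[simp]: "inf_equiv G w w"
  by (simp add: inf_equiv_def)

lemma inf_equiv_sym: "inf_equiv G w v \<Longrightarrow> inf_equiv G v w"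
  by (simp add: inf_equiv_def free_equiv_sym)

lemma inf_equiv_trans: "inf_equiv G w v \<Longrightarrow> inf_equiv G v u \<Longrightarrow> inf_equiv G w u"
  unfolding inf_equiv_def using free_equiv_trans by blast

lemma iw_class_self: "is_inf_word G w \<Longrightarrow> w \<in> iw_class G w"
  by (simp add: iw_class_def)

lemma iw_class_eqI: "inf_equiv G w v \<Longrightarrow> iw_class G w = iw_class G v"
  unfolding iw_class_def using inf_equiv_trans inf_equiv_sym by blast

lemma iw_class_some:
  assumes "is_inf_word G w"
  defines "x \<equiv> SOME x. x \<in> iw_class G w"
  shows "is_inf_word G x" "inf_equiv G w x"
proof -
  have "x \<in> iw_class G w" unfolding x_def using iw_class_self[OF assms(1)] by (rule someI[of "\<lambda>x. x \<in> iw_class G w"])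
  then show "is_inf_word G x" "inf_equiv G w x" by (auto simp: iw_class_def)
qed

lemma inf_equiv_concat_word:
  assumes "inf_equiv G w w'" "inf_equiv G v v'"
    and "is_inf_word G w" "is_inf_word G w'" "is_inf_word G v" "is_inf_word G v'"
    and grp: "\<And>i. group (G i)"
  shows "inf_equiv G (concat_word w v) (concat_word w' v')"
  unfolding inf_equiv_def
proof
  fix m
  show "free_equiv G (proj m (concat_word w v)) (proj m (concat_word w' v'))"
    using assms proj_concat_word[of G] free_equiv_append[OF _ _ _ _ grp] proj_valid[of G]
    by (simp add: inf_equiv_def)
qed

lemma top_prod_mult:
  assumes "is_inf_word G w" "is_inf_word G v" and grp: "\<And>i. group (G i)"
  shows "iw_class G w \<otimes>\<^bsub>top_prod G\<^esub> iw_class G v = iw_class G (concat_word w v)"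
proof -
  let ?x = "SOME x. x \<in> iw_class G w" and ?y = "SOME y. y \<in> iw_class G v"
  have "inf_equiv G (concat_word ?x ?y) (concat_word w v)"
    by (rule inf_equiv_concat_word) (use iw_class_some assms inf_equiv_sym in blast)+
  then show ?thesis by (simp add: Defs.top_prod_def iw_class_eqI)
qed

lemma top_prod_carrier: "carrier (top_prod G) = iw_class G ` {w. is_inf_word G w}"
  by (simp add: Defs.top_prod_def)

lemma top_prod_one: "\<one>\<^bsub>top_prod G\<^esub> = iw_class G (\<lambda>_. None)"
  by (simp add: Defs.top_prod_def)

lemma inf_equivI:
  assumes "\<And>m. proj m w = proj m v"
  shows "inf_equiv G w v"
  using assms by (simp add: inf_equiv_def)

lemma inf_equiv_concat_word_assoc:
  assumes "is_inf_word G x" "is_inf_word G y" "is_inf_word G z"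
  shows "inf_equiv G (concat_word (concat_word x y) z) (concat_word x (concat_word y z))"
  by (rule inf_equivI)
     (simp add: proj_concat_word[OF concat_word_inf_word[OF assms(1,2)] assms(3)]
       proj_concat_word[OF assms(1) concat_word_inf_word[OF assms(2,3)]]
       proj_concat_word[OF assms(1,2)] proj_concat_word[OF assms(2,3)])

lemma inf_equiv_concat_word_empty:
  assumes "is_inf_word G x"
  shows "inf_equiv G (concat_word (\<lambda>_. None) x) x"
  by (rule inf_equivI) (simp add: proj_concat_word[OF empty_inf_word assms])

lemma inf_equiv_concat_word_inv_iword:
  assumes "is_inf_word G x" "\<And>i. group (G i)"
  shows "inf_equiv G (concat_word (inv_iword G x) x) (\<lambda>_. None)"
  unfolding inf_equiv_def
  using proj_concat_word[OF inv_iword_inf_word[OF assms] assms(1)] proj_inv_iword[OF assms(1)]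
    inv_word_cancel[OF proj_valid[OF assms(1)] assms(2)]
  by simp

lemma group_top_prod:
  assumes grp: "\<And>i. group (G i)"
  shows "group (top_prod G)"
proof (rule groupI)
  fix U V assume "U \<in> carrier (top_prod G)" "V \<in> carrier (top_prod G)"
  then obtain x y where xy: "is_inf_word G x" "is_inf_word G y" "U = iw_class G x" "V = iw_class G y"
    by (auto simp: top_prod_carrier)
  then show "U \<otimes>\<^bsub>top_prod G\<^esub> V \<in> carrier (top_prod G)"
    using top_prod_mult[OF xy(1,2) grp] concat_word_inf_word[OF xy(1,2)] by (auto simp: top_prod_carrier)
next
  show "\<one>\<^bsub>top_prod G\<^esub> \<in> carrier (top_prod G)" by (auto simp: top_prod_carrier top_prod_one)
next
  fix U V W assume "U \<in> carrier (top_prod G)" "V \<in> carrier (top_prod G)" "W \<in> carrier (top_prod G)"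
  then obtain x y z where xyz: "is_inf_word G x" "is_inf_word G y" "is_inf_word G z"
    "U = iw_class G x" "V = iw_class G y" "W = iw_class G z"
    by (auto simp: top_prod_carrier)
  then show "U \<otimes>\<^bsub>top_prod G\<^esub> V \<otimes>\<^bsub>top_prod G\<^esub> W = U \<otimes>\<^bsub>top_prod G\<^esub> (V \<otimes>\<^bsub>top_prod G\<^esub> W)"
    using iw_class_eqI[OF inf_equiv_concat_word_assoc[OF xyz(1-3)]]
    by (simp add: top_prod_mult grp concat_word_inf_word)
next
  fix U assume "U \<in> carrier (top_prod G)"
  then obtain x where x: "is_inf_word G x" "U = iw_class G x" by (auto simp: top_prod_carrier)
  then show "\<one>\<^bsub>top_prod G\<^esub> \<otimes>\<^bsub>top_prod G\<^esub> U = U"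
    using iw_class_eqI[OF inf_equiv_concat_word_empty[OF x(1)]]
    by (simp add: top_prod_one top_prod_mult grp)
next
  fix U assume "U \<in> carrier (top_prod G)"
  then obtain x where x: "is_inf_word G x" "U = iw_class G x" by (auto simp: top_prod_carrier)
  have "iw_class G (inv_iword G x) \<otimes>\<^bsub>top_prod G\<^esub> U = \<one>\<^bsub>top_prod G\<^esub>"
    using iw_class_eqI[OF inf_equiv_concat_word_inv_iword[OF x(1) grp]] x
    by (simp add: top_prod_one top_prod_mult inv_iword_inf_word grp)
  then show "\<exists>V\<in>carrier (top_prod G). V \<otimes>\<^bsub>top_prod G\<^esub> U = \<one>\<^bsub>top_prod G\<^esub>"
    using inv_iword_inf_word[OF x(1) grp] by (auto simp: top_prod_carrier)
qed

section \<open>Normal closures and quotients\<close>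

lemma normal_closure_normal:
  assumes "group K" "S \<subseteq> carrier K"
  shows "normal_closure K S \<lhd> K"
proof -
  interpret K: group K by fact
  let ?F = "{N. N \<lhd> K \<and> S \<subseteq> N}"
  have "carrier K \<in> ?F" using assms K.subgroup_self by (auto intro: K.normal_invI)
  then have "subgroup (\<Inter>?F) K"
    by (intro K.subgroups_Inter) (auto simp: normal_def)
  moreover have "x \<otimes>\<^bsub>K\<^esub> h \<otimes>\<^bsub>K\<^esub> inv\<^bsub>K\<^esub> x \<in> \<Inter>?F" if "x \<in> carrier K" "h \<in> \<Inter>?F" for x h
    using that K.normal_inv_iff by blast
  ultimately show ?thesis unfolding normal_closure_def using K.normal_inv_iff by blast
qed

lemma normal_closure_subset: "S \<subseteq> normal_closure K S"
  unfolding normal_closure_def by blast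

lemma normal_closure_least: "N \<lhd> K \<Longrightarrow> S \<subseteq> N \<Longrightarrow> normal_closure K S \<subseteq> N"
  unfolding normal_closure_def by blast

lemma (in group_hom) r_coset_comp_group_hom:
  assumes "N \<lhd> H"
  shows "group_hom G (H Mod N) (\<lambda>x. N #>\<^bsub>H\<^esub> h x)"
proof -
  interpret N: normal N H by fact
  have "(\<lambda>a. N #>\<^bsub>H\<^esub> a) \<circ> h \<in> hom G (H Mod N)"
    by (rule Group.hom_compose[OF homh N.r_coset_hom_Mod])
  then show ?thesis
    by (intro group_hom.intro group_hom_axioms.intro G.is_group N.factorgroup_is_group)
       (simp add: comp_def)
qed

lemma (in group_hom) kernel_r_coset_comp:
  assumes "N \<lhd> H"
  shows "kernel G (H Mod N) (\<lambda>x. N #>\<^bsub>H\<^esub> h x) = {x \<in> carrier G. h x \<in> N}"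
proof -
  have "N #>\<^bsub>H\<^esub> h x = N \<longleftrightarrow> h x \<in> N" if "x \<in> carrier G" for x
    using H.coset_join1[of N "h x"] H.coset_join2[of "h x" N] that assms
    by (auto simp: normal_def)
  then show ?thesis by (auto simp: kernel_def)
qed

lemma (in group_hom) normal_vimage:
  assumes "N \<lhd> H"
  shows "{x \<in> carrier G. h x \<in> N} \<lhd> G"
  using group_hom.normal_kernel[OF r_coset_comp_group_hom[OF assms]] kernel_r_coset_comp[OF assms]
  by simp

lemma (in group_hom) FactGroup_iso_vimage:
  assumes "N \<lhd> H" "h ` carrier G = carrier H"
  shows "G Mod {x \<in> carrier G. h x \<in> N} \<cong> H Mod N"
proof -
  interpret q: group_hom G "H Mod N" "\<lambda>x. N #>\<^bsub>H\<^esub> h x"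
    by (rule r_coset_comp_group_hom[OF assms(1)])
  have "(\<lambda>x. N #>\<^bsub>H\<^esub> h x) ` carrier G = carrier (H Mod N)"
    using assms(2) by (auto simp: carrier_FactGroup image_image[symmetric, of "\<lambda>a. N #>\<^bsub>H\<^esub> a" h])
  then show ?thesis
    using q.FactGroup_iso kernel_r_coset_comp[OF assms(1)] by simp
qed

lemma (in group_hom) normal_closure_image:
  assumes "S \<subseteq> carrier G" "T \<subseteq> carrier H" "h ` S \<subseteq> T"
  shows "h ` normal_closure G S \<subseteq> normal_closure H T"
proof -
  have "normal_closure G S \<subseteq> {x \<in> carrier G. h x \<in> normal_closure H T}"
  proof (rule normal_closure_least)
    show "{x \<in> carrier G. h x \<in> normal_closure H T} \<lhd> G"
      by (rule normal_vimage[OF normal_closure_normal[OF H.is_group assms(2)]])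
    show "S \<subseteq> {x \<in> carrier G. h x \<in> normal_closure H T}"
      using assms normal_closure_subset[of T H] by auto
  qed
  then show ?thesis by auto
qed

lemma (in normal) mult_inv_mult_normal:
  assumes "a \<in> carrier G" "b \<in> carrier G" "s \<in> H"
  shows "a \<otimes> b \<otimes> inv (a \<otimes> s \<otimes> b) \<in> H"
proof -
  have s: "s \<in> carrier G" using assms(3) subset by blast
  have cancel: "\<And>x y. x \<in> carrier G \<Longrightarrow> y \<in> carrier G \<Longrightarrow> x \<otimes> (inv x \<otimes> y) = y"
    by (simp add: m_assoc[symmetric])
  have "a \<otimes> b \<otimes> inv (a \<otimes> s \<otimes> b) = inv (inv a) \<otimes> inv s \<otimes> inv a"
    using assms s by (simp add: inv_mult_group m_assoc cancel)
  then show ?thesis using inv_op_closed1[of "inv a" "inv s"] m_inv_closed[OF assms(3)] assms s by simp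
qed

lemma (in group) subgroup_mult_inv_trans:
  assumes "subgroup N G" "x \<otimes> inv y \<in> N" "y \<otimes> inv z \<in> N"
    and "x \<in> carrier G" "y \<in> carrier G" "z \<in> carrier G"
  shows "x \<otimes> inv z \<in> N"
proof -
  have "x \<otimes> inv z = (x \<otimes> inv y) \<otimes> (y \<otimes> inv z)"
    using assms(4-6) by (simp add: m_assoc[symmetric]) (simp add: m_assoc)
  then show ?thesis using subgroup.m_closed[OF assms(1-3)] by simp
qed

section \<open>Deleting finitely many letters\<close>

definition restrict_word :: "rat set \<Rightarrow> (rat \<Rightarrow> 'c option) \<Rightarrow> rat \<Rightarrow> 'c option" where
  "restrict_word D w p = (if p \<in> D then w p else None)"

lemma restrict_word_restrict_word [simp]:
  "restrict_word D (restrict_word E w) = restrict_word (D \<inter> E) w"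
  by (rule ext) (simp add: restrict_word_def)

lemma restrict_word_UNIV [simp]: "restrict_word UNIV w = w"
  by (rule ext) (simp add: restrict_word_def)

lemma restrict_word_inf_word:
  assumes "is_inf_word G w"
  shows "is_inf_word G (restrict_word D w)"
proof (rule is_inf_wordI)
  fix q l assume "restrict_word D w q = Some l"
  then have "w q = Some l" by (auto simp: restrict_word_def split: if_splits)
  then show "valid_letter G l" by (rule inf_word_valid_letter[OF assms])
next
  fix n
  have "{q. \<exists>l. restrict_word D w q = Some l \<and> fst l = n} \<subseteq> {q. \<exists>l. w q = Some l \<and> fst l = n}"
    by (auto simp: restrict_word_def split: if_splits)
  then show "finite {q. \<exists>l. restrict_word D w q = Some l \<and> fst l = n}"
    using inf_word_finite_index[OF assms] by (rule finite_subset)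
qed

lemma positions_restrict_word: "positions m (restrict_word D w) = positions m w \<inter> D"
  by (auto simp: positions_def restrict_word_def split: if_splits)

lemma proj_restrict_word:
  assumes "is_inf_word G w"
  shows "proj m (restrict_word D w) = map (the \<circ> w) (sorted_list_of_set (positions m w \<inter> D))"
proof -
  have "proj m (restrict_word D w)
      = map (the \<circ> restrict_word D w) (sorted_list_of_set (positions m w \<inter> D))"
    by (simp add: proj_positions positions_restrict_word)
  also have "\<dots> = map (the \<circ> w) (sorted_list_of_set (positions m w \<inter> D))"
    using finite_positions[OF assms, of m] by (intro map_cong) (auto simp: restrict_word_def)
  finally show ?thesis .
qed

lemma proj_split:
  assumes "is_inf_word G w" "\<And>x y. x \<in> D \<Longrightarrow> y \<notin> D \<Longrightarrow> x < y"
  shows "proj m w = proj m (restrict_word D w) @ proj m (restrict_word (-D) w)"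
proof -
  have fin: "finite (positions m w \<inter> D)" "finite (positions m w \<inter> -D)"
    using finite_positions[OF assms(1), of m] by auto
  have "positions m w = (positions m w \<inter> D) \<union> (positions m w \<inter> -D)" by blast
  then have "sorted_list_of_set (positions m w)
      = sorted_list_of_set (positions m w \<inter> D) @ sorted_list_of_set (positions m w \<inter> -D)"
    using sorted_list_of_set_Un_ordered[OF fin] assms(2) by auto
  then show ?thesis using proj_restrict_word[OF assms(1)] by (simp add: proj_positions)
qed

lemma iw_class_split:
  assumes "is_inf_word G w" "\<And>x y. x \<in> D \<Longrightarrow> y \<notin> D \<Longrightarrow> x < y" "\<And>i. group (G i)"
  shows "iw_class G w = iw_class G (restrict_word D w) \<otimes>\<^bsub>top_prod G\<^esub> iw_class G (restrict_word (-D) w)"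
proof -
  have r: "is_inf_word G (restrict_word D w)" "is_inf_word G (restrict_word (-D) w)"
    using restrict_word_inf_word assms(1) by blast+
  have "inf_equiv G w (concat_word (restrict_word D w) (restrict_word (-D) w))"
    by (rule inf_equivI) (simp add: proj_concat_word[OF r] proj_split[OF assms(1,2)])
  then show ?thesis using top_prod_mult[OF r assms(3)] by (simp add: iw_class_eqI)
qed

definition free_normal_closure :: "(nat \<Rightarrow> ('a, 'b) monoid_scheme) \<Rightarrow> 'a iword set set" where
  "free_normal_closure G = normal_closure (top_prod G) (free_prod_sub G)"

lemma free_prod_sub_carrier: "free_prod_sub G \<subseteq> carrier (top_prod G)"
  by (auto simp: free_prod_sub_def top_prod_carrier)

lemma free_normal_closure_normal: "(\<And>i. group (G i)) \<Longrightarrow> free_normal_closure G \<lhd> top_prod G"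
  unfolding free_normal_closure_def by (rule normal_closure_normal[OF group_top_prod free_prod_sub_carrier])

lemma delete_position_in_closure:
  assumes "is_inf_word G w" "\<And>i. group (G i)"
  shows "iw_class G (restrict_word (-{q}) w) \<otimes>\<^bsub>top_prod G\<^esub> inv\<^bsub>top_prod G\<^esub> iw_class G w
    \<in> free_normal_closure G"
proof -
  interpret N: normal "free_normal_closure G" "top_prod G"
    by (rule free_normal_closure_normal[OF assms(2)])
  let ?a = "iw_class G (restrict_word {p. p < q} w)"
  let ?s = "iw_class G (restrict_word {q} w)"
  let ?b = "iw_class G (restrict_word {p. q < p} w)"
  have r: "\<And>D. is_inf_word G (restrict_word D w)" using restrict_word_inf_word[OF assms(1)] .
  then have carr: "?a \<in> carrier (top_prod G)" "?b \<in> carrier (top_prod G)"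
    by (auto simp: top_prod_carrier)
  have split: "iw_class G (restrict_word E w) = iw_class G (restrict_word (D \<inter> E) w)
        \<otimes>\<^bsub>top_prod G\<^esub> iw_class G (restrict_word (-D \<inter> E) w)"
    if "\<And>x y. x \<in> D \<Longrightarrow> y \<notin> D \<Longrightarrow> x < y" for D E
    using iw_class_split[OF r[of E] that assms(2)] by simp
  have sets: "{p. p \<le> q} \<inter> - {p. p < q} = {q}" "- {p. p \<le> q} \<inter> - {p. p < q} = {p. q < p}"
    "{p. p < q} \<inter> - {q} = {p. p < q}" "- {p. p < q} \<inter> - {q} = {p. q < p}"
    "{p. p < q} \<inter> UNIV = {p. p < q}" "- {p. p < q} \<inter> UNIV = - {p. p < q}"
    by auto
  have "iw_class G (restrict_word (-{p. p < q}) w) = ?s \<otimes>\<^bsub>top_prod G\<^esub> ?b"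
    using split[of "{p. p \<le> q}" "-{p. p < q}"] unfolding sets by auto
  moreover have "iw_class G (restrict_word UNIV w) = ?a
      \<otimes>\<^bsub>top_prod G\<^esub> iw_class G (restrict_word (-{p. p < q}) w)"
    using split[of "{p. p < q}" UNIV] unfolding sets by auto
  ultimately have w: "iw_class G w = ?a \<otimes>\<^bsub>top_prod G\<^esub> ?s \<otimes>\<^bsub>top_prod G\<^esub> ?b"
    using carr r by (simp add: N.m_assoc top_prod_carrier)
  have "iw_class G (restrict_word (-{q}) w) = ?a \<otimes>\<^bsub>top_prod G\<^esub> ?b"
    using split[of "{p. p < q}" "-{q}"] unfolding sets by auto
  moreover have "?s \<in> free_normal_closure G"
  proof -
    have "finite {p. restrict_word {q} w p \<noteq> None}"
      by (rule finite_subset[of _ "{q}"]) (auto simp: restrict_word_def)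
    then have "?s \<in> free_prod_sub G" using r by (auto simp: free_prod_sub_def)
    then show ?thesis
      using normal_closure_subset[of "free_prod_sub G" "top_prod G"]
      unfolding free_normal_closure_def by blast
  qed
  ultimately show ?thesis using N.mult_inv_mult_normal[OF carr] w by simp
qed

lemma delete_finite_positions_in_closure:
  assumes "finite F" "is_inf_word G w" "\<And>i. group (G i)"
  shows "iw_class G (restrict_word (-F) w) \<otimes>\<^bsub>top_prod G\<^esub> inv\<^bsub>top_prod G\<^esub> iw_class G w
    \<in> free_normal_closure G"
  using assms(1)
proof (induction F rule: finite_induct)
  interpret N: normal "free_normal_closure G" "top_prod G"
    by (rule free_normal_closure_normal[OF assms(3)])
  have carr: "\<And>D. iw_class G (restrict_word D w) \<in> carrier (top_prod G)"
    using restrict_word_inf_word[OF assms(2)] by (auto simp: top_prod_carrier)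
  have w_carr: "iw_class G w \<in> carrier (top_prod G)"
    using carr[of UNIV] by (simp only: restrict_word_UNIV)
  {
    case empty
    show ?case
      using w_carr subgroup.one_closed[OF N.subgroup_axioms]
      by (simp only: Compl_empty_eq restrict_word_UNIV N.r_inv)
  next
    case (insert q F)
    have eq: "restrict_word (- insert q F) w = restrict_word (-{q}) (restrict_word (-F) w)"
      by (rule ext) (simp add: restrict_word_def)
    have "iw_class G (restrict_word (-{q}) (restrict_word (-F) w))
        \<otimes>\<^bsub>top_prod G\<^esub> inv\<^bsub>top_prod G\<^esub> iw_class G (restrict_word (-F) w) \<in> free_normal_closure G"
      by (rule delete_position_in_closure[OF restrict_word_inf_word[OF assms(2)] assms(3)])
    from N.subgroup_mult_inv_trans[OF N.subgroup_axioms this insert.IH _ carr w_carr]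
    show ?case unfolding eq by (simp add: carr)
  }
qed

locale block_partition =
  fixes G :: "nat \<Rightarrow> ('a, 'b) monoid_scheme"
    and A :: "nat set"
    and P :: "nat \<Rightarrow> nat set"
  assumes groups: "\<And>n. group (G n)"
    and finA: "finite A"
    and finP: "\<And>n. finite (P n)"
    and disj: "\<And>m n. m \<noteq> n \<Longrightarrow> P m \<inter> P n = {}"
    and cover: "(\<Union>n. P n) = UNIV - A"
begin

definition block_prod :: "nat \<Rightarrow> 'a word set monoid" where
  "block_prod n = free_prod (P n) G"

lemma groups_block_prod: "group (block_prod n)"
  unfolding block_prod_def using group_free_prod groups by blast

definition block_of :: "nat \<Rightarrow> nat" where "block_of i = (SOME n. i \<in> P n)"

lemma block_not_in_A: "i \<in> P n \<Longrightarrow> i \<notin> A"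
  using cover by blast

lemma block_of_in: "i \<notin> A \<Longrightarrow> i \<in> P (block_of i)"
proof -
  assume "i \<notin> A"
  then have "\<exists>n. i \<in> P n" using cover by blast
  then show ?thesis unfolding block_of_def by (rule someI_ex)
qed

lemma block_of_eq: "i \<in> P n \<Longrightarrow> block_of i = n"
  using block_of_in[OF block_not_in_A] disj by blast

text \<open>Only finitely many indices feed into finitely many blocks and vice versa; these bounds
  let a projection of \<open>collapse w\<close> or \<open>expand v\<close> be computed from a single projection of
  \<open>w\<close> or \<open>v\<close>.\<close>

definition block_bound :: "nat \<Rightarrow> nat" where
  "block_bound M = Suc (Max (insert 0 (block_of ` ({..<M} - A))))"

lemma block_of_less_block_bound: "i < M \<Longrightarrow> i \<notin> A \<Longrightarrow> block_of i < block_bound M"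
  unfolding block_bound_def by (simp add: le_imp_less_Suc)

definition index_bound :: "nat \<Rightarrow> nat" where
  "index_bound m = Suc (Max (insert 0 (\<Union>n<m. P n)))"

lemma less_index_bound: "i \<notin> A \<Longrightarrow> block_of i < m \<Longrightarrow> i < index_bound m"
proof -
  assume "i \<notin> A" "block_of i < m"
  then have "i \<in> (\<Union>n<m. P n)" using block_of_in by blast
  moreover have "finite (insert 0 (\<Union>n<m. P n))" using finP by simp
  ultimately show ?thesis unfolding index_bound_def by (simp add: le_imp_less_Suc)
qed

section \<open>Collapsing letters into blocks\<close>

definition lift_letter :: "nat \<times> 'a \<Rightarrow> 'a block_letter" where
  "lift_letter l = (block_of (fst l), fw_class (P (block_of (fst l))) G [l])"

definition collapse :: "'a iword \<Rightarrow> 'a block_iword" where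
  "collapse w q = (case w q of None \<Rightarrow> None | Some l \<Rightarrow> if fst l \<in> A then None else Some (lift_letter l))"

lemma single_letter_words_over:
  assumes "valid_letter G l" "fst l \<notin> A"
  shows "[l] \<in> words_over (P (block_of (fst l))) G"
  using assms block_of_in by (simp add: words_over_def)

lemma lift_letter_valid:
  assumes "valid_letter G l" "fst l \<notin> A"
  shows "valid_letter block_prod (lift_letter l)"
proof -
  have w: "[l] \<in> words_over (P (block_of (fst l))) G" using single_letter_words_over assms by blast
  have "fw_class (P (block_of (fst l))) G [l] \<noteq> fw_class (P (block_of (fst l))) G []"
    using fw_class_eqD[OF _ w] single_letter_not_free_equiv_Nil[OF assms(1) groups] by blast
  then show ?thesis using w
    by (simp add: valid_letter_def lift_letter_def block_prod_def free_prod_carrier free_prod_one)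
qed

lemma collapse_inf_word:
  assumes "is_inf_word G w"
  shows "is_inf_word block_prod (collapse w)"
proof (rule is_inf_wordI)
  fix q l' assume "collapse w q = Some l'"
  then obtain l where "w q = Some l" "fst l \<notin> A" "l' = lift_letter l"
    by (auto simp: collapse_def split: option.splits if_splits)
  then show "valid_letter block_prod l'" using lift_letter_valid inf_word_valid_letter[OF assms] by blast
next
  fix n
  have "{q. \<exists>l'. collapse w q = Some l' \<and> fst l' = n} \<subseteq> (\<Union>i\<in>P n. {q. \<exists>l. w q = Some l \<and> fst l = i})"
  proof
    fix q assume "q \<in> {q. \<exists>l'. collapse w q = Some l' \<and> fst l' = n}"
    then obtain l' where l': "collapse w q = Some l'" "fst l' = n" by blast
    then obtain l where l: "w q = Some l" "fst l \<notin> A" "l' = lift_letter l"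
      by (auto simp: collapse_def split: option.splits if_splits)
    then have "fst l \<in> P n" using l' block_of_in by (auto simp: lift_letter_def)
    then show "q \<in> (\<Union>i\<in>P n. {q. \<exists>l. w q = Some l \<and> fst l = i})"
      using l(1) by (intro UN_I[of "fst l"] CollectI exI[of _ l] conjI) simp_all
  qed
  moreover have "finite (\<Union>i\<in>P n. {q. \<exists>l. w q = Some l \<and> fst l = i})"
    using finP inf_word_finite_index[OF assms] by blast
  ultimately show "finite {q. \<exists>l'. collapse w q = Some l' \<and> fst l' = n}" by (rule finite_subset)
qed

lemma collapse_concat_word: "collapse (concat_word x y) = concat_word (collapse x) (collapse y)"
  by (rule ext) (simp add: concat_word_def collapse_def)

lemma collapse_finite: "finite {q. w q \<noteq> None} \<Longrightarrow> finite {q. collapse w q \<noteq> None}"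
  by (rule finite_subset[rotated]) (auto simp: collapse_def split: option.splits)

lemma proj_collapse:
  assumes "is_inf_word G w" "\<And>i. i \<notin> A \<Longrightarrow> block_of i < m \<Longrightarrow> i < K"
  shows "proj m (collapse w) = map lift_letter (filter (\<lambda>l. fst l \<notin> A \<and> block_of (fst l) < m) (proj K w))"
proof -
  have "positions m (collapse w) = {q \<in> positions K w. fst (the (w q)) \<notin> A \<and> block_of (fst (the (w q))) < m}"
  proof (rule equalityI; rule subsetI)
    fix q assume "q \<in> positions m (collapse w)"
    then obtain l' where l': "collapse w q = Some l'" "fst l' < m" unfolding positions_def by blast
    then obtain l where l: "w q = Some l" "fst l \<notin> A" "l' = lift_letter l"
      by (auto simp: collapse_def split: option.splits if_splits)
    then have "block_of (fst l) < m" using l' by (simp add: lift_letter_def)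
    then have "fst l < K" using assms(2) l by blast
    then have "q \<in> positions K w" using l unfolding positions_def by blast
    then show "q \<in> {q \<in> positions K w. fst (the (w q)) \<notin> A \<and> block_of (fst (the (w q))) < m}"
      using l \<open>block_of (fst l) < m\<close> by simp
  next
    fix q assume q: "q \<in> {q \<in> positions K w. fst (the (w q)) \<notin> A \<and> block_of (fst (the (w q))) < m}"
    then obtain l where l: "w q = Some l" unfolding positions_def by blast
    then have "collapse w q = Some (lift_letter l)" "fst (lift_letter l) < m" using q by (simp_all add: collapse_def lift_letter_def)
    then show "q \<in> positions m (collapse w)" unfolding positions_def by blast
  qed
  moreover have "the (collapse w q) = lift_letter (the (w q))" if "q \<in> positions K w" "fst (the (w q)) \<notin> A" for q
    using that by (auto simp: collapse_def positions_def)
  ultimately have "proj m (collapse w) = map lift_letter (map (the \<circ> w) (sorted_list_of_set {q \<in> positions K w. fst (the (w q)) \<notin> A \<and> block_of (fst (the (w q))) < m}))"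
    using finite_positions[OF assms(1), of K] by (simp add: proj_positions)
  also have "\<dots> = map lift_letter (filter (\<lambda>l. fst l \<notin> A \<and> block_of (fst l) < m) (proj K w))"
    using proj_filter_positions[OF finite_positions[OF assms(1)], where C = "\<lambda>l. fst l \<notin> A \<and> block_of (fst l) < m"] by simp
  finally show ?thesis .
qed


definition collapse_list :: "'a word \<Rightarrow> 'a block_word" where
  "collapse_list x = map lift_letter (filter (\<lambda>l. fst l \<notin> A) x)"

lemma collapse_list_simps[simp]: "collapse_list [] = []" "collapse_list (x @ y) = collapse_list x @ collapse_list y"
  "collapse_list (l # x) = (if fst l \<in> A then collapse_list x else lift_letter l # collapse_list x)"
  by (simp_all add: collapse_list_def)

lemma collapse_list_valid: "valid_word G x \<Longrightarrow> valid_word block_prod (collapse_list x)"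
  by (induction x) (auto simp: lift_letter_valid)

lemma lift_letter_in: "i \<in> P n \<Longrightarrow> lift_letter (i,g) = (n, fw_class (P n) G [(i,g)])"
  using block_of_eq by (simp add: lift_letter_def)

lemma map_lift_letter_valid:
  assumes "x \<in> words_over (P n) G"
  shows "valid_word block_prod (map lift_letter x)"
  using assms block_not_in_A by (auto simp: words_over_def valid_word_def intro!: lift_letter_valid)

lemma free_equiv_map_lift_letter:
  assumes "x \<in> words_over (P n) G"
  shows "free_equiv block_prod (map lift_letter x) (letter_word block_prod n (fw_class (P n) G x))"
  using assms
proof (induction x rule: rev_induct)
  case Nil
  then show ?case by (simp add: letter_word_def block_prod_def free_prod_one)
next
  case (snoc l x)
  have x: "x \<in> words_over (P n) G" and l: "[l] \<in> words_over (P n) G"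
    using snoc.prems by (auto simp: words_over_def)
  obtain i g where ig: "l = (i, g)" "i \<in> P n" "valid_letter G l"
    using l by (cases l) (auto simp: words_over_def)
  have lift: "lift_letter l = (n, fw_class (P n) G [l])"
    using lift_letter_in[OF ig(2)] ig(1) by simp
  have valid_lift: "valid_letter block_prod (n, fw_class (P n) G [l])"
    using lift_letter_valid[OF ig(3)] block_not_in_A ig lift by simp
  have "free_equiv block_prod (map lift_letter x @ [lift_letter l])
      (letter_word block_prod n (fw_class (P n) G x) @ [lift_letter l])"
    by (rule free_equiv_append[OF snoc.IH[OF x] free_equiv_refl map_lift_letter_valid[OF x] _ groups_block_prod])
       (simp add: lift valid_lift)
  moreover have "free_equiv block_prod
      (letter_word block_prod n (fw_class (P n) G x) @ [(n, fw_class (P n) G [l])])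
      (letter_word block_prod n (fw_class (P n) G x \<otimes>\<^bsub>block_prod n\<^esub> fw_class (P n) G [l]))"
    by (rule free_equiv_letter_word_append[OF groups_block_prod _ valid_lift])
       (use x in \<open>simp add: block_prod_def free_prod_carrier\<close>)
  moreover have "fw_class (P n) G x \<otimes>\<^bsub>block_prod n\<^esub> fw_class (P n) G [l] = fw_class (P n) G (x @ [l])"
    using free_prod_mult[OF x l groups] by (simp add: block_prod_def)
  ultimately show ?case using lift by (auto intro: free_equiv_trans)
qed

lemma free_equiv_collapse_list_block:
  assumes "x \<in> words_over (P n) G" "y \<in> words_over (P n) G" "free_equiv G x y"
  shows "free_equiv block_prod (collapse_list x) (collapse_list y)"
proof -
  have "collapse_list z = map lift_letter z" if "z \<in> words_over (P n) G" for z
  proof -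
    have "filter (\<lambda>l. fst l \<notin> A) z = z"
      using that block_not_in_A by (auto simp: words_over_def intro!: filter_True)
    then show ?thesis by (simp add: collapse_list_def)
  qed
  then show ?thesis
    using free_equiv_map_lift_letter[OF assms(1)] free_equiv_map_lift_letter[OF assms(2)]
      fw_class_eqI[OF assms(3)] assms(1,2)
    by (auto intro: free_equiv_trans free_equiv_sym)
qed

lemma red_step_collapse_list:
  assumes "red_step G y z"
  shows "free_equiv block_prod (collapse_list y) (collapse_list z)"
  using assms
proof cases
  case (merge ws us i a b)
  show ?thesis
  proof (cases "i \<in> A")
    case False
    have "[(i,a), (i,b)] \<in> words_over (P (block_of i)) G" "[(i, a \<otimes>\<^bsub>G i\<^esub> b)] \<in> words_over (P (block_of i)) G"
      using merge False block_of_in groups[of i]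
      by (auto simp: words_over_def valid_letter_def group.is_monoid monoid.m_closed)
    moreover have "free_equiv G [(i,a), (i,b)] [(i, a \<otimes>\<^bsub>G i\<^esub> b)]"
      using red_step.merge[of G "[]" "[]" i a b] merge by (simp add: free_equiv_stepI)
    ultimately have "free_equiv block_prod (collapse_list [(i,a), (i,b)]) (collapse_list [(i, a \<otimes>\<^bsub>G i\<^esub> b)])"
      by (rule free_equiv_collapse_list_block)
    then have "free_equiv block_prod (collapse_list ws @ collapse_list [(i,a), (i,b)] @ collapse_list us)
        (collapse_list ws @ collapse_list [(i, a \<otimes>\<^bsub>G i\<^esub> b)] @ collapse_list us)"
      by (rule free_equiv_context[OF _ collapse_list_valid[OF merge(3)] collapse_list_valid[OF merge(4)]])
    then show ?thesis using merge False by simp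
  qed (use merge in simp)
next
  case (cancel ws us i a b)
  show ?thesis
  proof (cases "i \<in> A")
    case False
    have "[(i,a), (i,b)] \<in> words_over (P (block_of i)) G"
      using cancel False block_of_in by (auto simp: words_over_def)
    moreover have "[] \<in> words_over (P (block_of i)) G" by simp
    moreover have "free_equiv G [(i,a), (i,b)] []"
      using red_step.cancel[of G "[]" "[]" i a b] cancel by (simp add: free_equiv_stepI)
    ultimately have "free_equiv block_prod (collapse_list [(i,a), (i,b)]) (collapse_list [])"
      by (rule free_equiv_collapse_list_block)
    then have "free_equiv block_prod (collapse_list ws @ collapse_list [(i,a), (i,b)] @ collapse_list us)
        (collapse_list ws @ collapse_list [] @ collapse_list us)"
      by (rule free_equiv_context[OF _ collapse_list_valid[OF cancel(3)] collapse_list_valid[OF cancel(4)]])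
    then show ?thesis using cancel False by simp
  qed (use cancel in simp)
qed

lemma free_equiv_collapse_list:
  assumes "free_equiv G x y"
  shows "free_equiv block_prod (collapse_list x) (collapse_list y)"
  using assms equivp_free_equiv by (rule free_equiv_map) (rule red_step_collapse_list)

lemma proj_collapse_index_bound:
  assumes "is_inf_word G w"
  shows "proj m (collapse w) = collapse_list (filter (\<lambda>l. block_of (fst l) < m) (proj (index_bound m) w))"
  using proj_collapse[OF assms, of m "index_bound m"] less_index_bound by (simp add: collapse_list_def conj_commute)

lemma collapse_inf_equiv:
  assumes "inf_equiv G w v" "is_inf_word G w" "is_inf_word G v"
  shows "inf_equiv block_prod (collapse w) (collapse v)"
  unfolding inf_equiv_def
proof
  fix m
  have "free_equiv G (proj (index_bound m) w) (proj (index_bound m) v)" using assms(1) by (simp add: inf_equiv_def)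
  then have "free_equiv G (filter (\<lambda>l. block_of (fst l) < m) (proj (index_bound m) w)) (filter (\<lambda>l. block_of (fst l) < m) (proj (index_bound m) v))"
    by (rule free_equiv_filter)
  then show "free_equiv block_prod (proj m (collapse w)) (proj m (collapse v))"
    unfolding proj_collapse_index_bound[OF assms(2)] proj_collapse_index_bound[OF assms(3)] by (rule free_equiv_collapse_list)
qed


section \<open>Expanding block letters\<close>

definition class_rep :: "'a word set \<Rightarrow> 'a word" where
  "class_rep U = (SOME x. x \<in> U)"

lemma class_rep_carrier:
  assumes "U \<in> carrier (block_prod n)"
  shows "class_rep U \<in> words_over (P n) G" "fw_class (P n) G (class_rep U) = U"
proof -
  obtain x where x: "x \<in> words_over (P n) G" "U = fw_class (P n) G x"
    using assms by (auto simp: block_prod_def free_prod_carrier)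
  have r: "class_rep U \<in> fw_class (P n) G x" unfolding class_rep_def x(2) using fw_class_self[OF x(1)]
    by (rule someI[of "\<lambda>y. y \<in> fw_class (P n) G x"])
  then show "class_rep U \<in> words_over (P n) G" by (simp add: fw_class_def)
  show "fw_class (P n) G (class_rep U) = U" using fw_class_eq[OF r] x(2) by simp
qed

lemma class_rep_letter:
  assumes "is_inf_word block_prod v" "v q = Some L"
  shows "class_rep (snd L) \<in> words_over (P (fst L)) G" "fw_class (P (fst L)) G (class_rep (snd L)) = snd L"
    "snd L \<noteq> fw_class (P (fst L)) G []"
  using inf_word_valid_letter[OF assms] class_rep_carrier[of "snd L" "fst L"]
  by (auto simp: valid_letter_def block_prod_def free_prod_one)

text \<open>The \<open>j\<close>-th letter of the chosen representative of the block letter at position \<open>q\<close>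
  is placed at position \<open>rat_pair_emb (q, j)\<close>; \<open>rat \<times> nat\<close> carries the lexicographic order.\<close>

definition expand_entry :: "'a block_iword \<Rightarrow> rat \<times> nat \<Rightarrow> (nat \<times> 'a) option" where
  "expand_entry v x = (case v (fst x) of None \<Rightarrow> None
     | Some L \<Rightarrow> if snd x < length (class_rep (snd L)) then Some (class_rep (snd L) ! snd x) else None)"

definition expand :: "'a block_iword \<Rightarrow> 'a iword" where
  "expand v p = (if p \<in> range rat_pair_emb then expand_entry v (inv_into UNIV rat_pair_emb p) else None)"

lemma expand_rat_pair_emb[simp]: "expand v (rat_pair_emb x) = expand_entry v x"
  by (simp add: expand_def inj_rat_pair_emb)

lemma expand_cases: "expand v p \<noteq> None \<Longrightarrow> \<exists>x. p = rat_pair_emb x"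
  by (auto simp: expand_def split: if_splits)

lemma expand_entry_SomeD:
  assumes "expand_entry v x = Some l"
  obtains L where "v (fst x) = Some L" "snd x < length (class_rep (snd L))" "l = class_rep (snd L) ! snd x"
  using assms by (auto simp: expand_entry_def split: option.splits if_splits)

lemma expand_entry_letter:
  assumes "is_inf_word block_prod v" "expand_entry v x = Some l"
  shows "valid_letter G l" "\<exists>L. v (fst x) = Some L \<and> fst l \<in> P (fst L)"
proof -
  obtain L where L: "v (fst x) = Some L" "snd x < length (class_rep (snd L))" "l = class_rep (snd L) ! snd x"
    using expand_entry_SomeD[OF assms(2)] by blast
  have "class_rep (snd L) \<in> words_over (P (fst L)) G" using class_rep_letter[OF assms(1) L(1)] by blast
  moreover have "l \<in> set (class_rep (snd L))" using L by simp
  ultimately show "valid_letter G l" "\<exists>L. v (fst x) = Some L \<and> fst l \<in> P (fst L)"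
    using L(1) by (auto simp: words_over_def valid_word_def)
qed

definition rep_length :: "'a block_iword \<Rightarrow> rat \<Rightarrow> nat" where
  "rep_length v q = length (class_rep (snd (the (v q))))"

lemma expand_inf_word:
  assumes "is_inf_word block_prod v"
  shows "is_inf_word G (expand v)"
proof (rule is_inf_wordI)
  fix p l assume pl: "expand v p = Some l"
  then obtain x where "p = rat_pair_emb x" using expand_cases by blast
  then show "valid_letter G l" using pl expand_entry_letter[OF assms] by simp
next
  fix i
  let ?S = "{q. \<exists>L. v q = Some L \<and> fst L = block_of i}"
  have "{p. \<exists>l. expand v p = Some l \<and> fst l = i} \<subseteq> rat_pair_emb ` {(q,j). q \<in> ?S \<and> j < rep_length v q}"
  proof
    fix p assume "p \<in> {p. \<exists>l. expand v p = Some l \<and> fst l = i}"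
    then obtain l where pl: "expand v p = Some l" "fst l = i" by blast
    then obtain x where px: "p = rat_pair_emb x" using expand_cases by blast
    then have el: "expand_entry v x = Some l" using pl by simp
    then obtain L where L: "v (fst x) = Some L" "snd x < length (class_rep (snd L))" "l = class_rep (snd L) ! snd x"
      by (rule expand_entry_SomeD)
    obtain L' where "v (fst x) = Some L'" "fst l \<in> P (fst L')" using expand_entry_letter(2)[OF assms el] by blast
    then have "fst L = block_of i" using L pl block_of_eq by simp
    then have "fst x \<in> ?S" using L(1) by (intro CollectI exI[of _ L] conjI)
    then have "x \<in> {(q,j). q \<in> ?S \<and> j < rep_length v q}" using L by (cases x) (simp add: rep_length_def)
    then show "p \<in> rat_pair_emb ` {(q,j). q \<in> ?S \<and> j < rep_length v q}" using px by blast
  qed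
  moreover have "finite ?S" using inf_word_finite_index[OF assms] by blast
  then have "finite (rat_pair_emb ` {(q,j). q \<in> ?S \<and> j < rep_length v q})" using finite_pairs_below by blast
  ultimately show "finite {p. \<exists>l. expand v p = Some l \<and> fst l = i}" by (rule finite_subset)
qed

definition expand_list :: "'a block_word \<Rightarrow> 'a word" where
  "expand_list xs = concat (map (\<lambda>L. class_rep (snd L)) xs)"

lemma expand_list_simps[simp]: "expand_list [] = []" "expand_list (x @ y) = expand_list x @ expand_list y" "expand_list (L # x) = class_rep (snd L) @ expand_list x"
  by (simp_all add: expand_list_def)

lemma map_expand_entry_concat:
  assumes "\<forall>q\<in>set qs. v q \<noteq> None"
  shows "map (the \<circ> expand_entry v) (concat (map (\<lambda>q. map (Pair q) [0..<rep_length v q]) qs))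
       = concat (map (\<lambda>q. class_rep (snd (the (v q)))) qs)"
  using assms
proof (induction qs)
  case (Cons q qs)
  obtain L where L: "v q = Some L" using Cons.prems by auto
  have ll: "rep_length v q = length (class_rep (snd L))" by (simp add: rep_length_def L)
  have "map (the \<circ> expand_entry v) (map (Pair q) [0..<rep_length v q]) = map (\<lambda>j. the (expand_entry v (q,j))) [0..<rep_length v q]"
    by simp
  also have "\<dots> = map (\<lambda>j. class_rep (snd L) ! j) [0..<length (class_rep (snd L))]"
    unfolding ll by (rule map_cong) (auto simp: expand_entry_def L)
  finally have "map (the \<circ> expand_entry v) (map (Pair q) [0..<rep_length v q]) = map (\<lambda>j. class_rep (snd L) ! j) [0..<length (class_rep (snd L))]" .
  then have a: "map (the \<circ> expand_entry v) (map (Pair q) [0..<rep_length v q]) = class_rep (snd (the (v q)))"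
    by (simp add: L map_nth)
  have IH: "map (the \<circ> expand_entry v) (concat (map (\<lambda>q. map (Pair q) [0..<rep_length v q]) qs)) = concat (map (\<lambda>q. class_rep (snd (the (v q)))) qs)"
    using Cons.prems by (intro Cons.IH) simp
  show ?case using a IH by (simp only: list.map(2) concat.simps(2) map_append)
qed simp

lemma positions_expand:
  assumes "is_inf_word block_prod v" "\<And>i. i < M \<Longrightarrow> i \<notin> A \<Longrightarrow> block_of i < m"
  shows "positions M (expand v) = rat_pair_emb `
    {x \<in> {(q,j). q \<in> positions m v \<and> j < rep_length v q}. fst (the (expand_entry v x)) < M}"
  (is "_ = rat_pair_emb ` {x \<in> ?T. ?C x}")
proof (rule equalityI; rule subsetI)
  fix p assume "p \<in> positions M (expand v)"
  then obtain l where pl: "expand v p = Some l" "fst l < M" unfolding positions_def by blast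
  then obtain x where px: "p = rat_pair_emb x" using expand_cases by blast
  then have el: "expand_entry v x = Some l" using pl by simp
  then obtain L where L: "v (fst x) = Some L" "snd x < length (class_rep (snd L))" "l = class_rep (snd L) ! snd x"
    by (rule expand_entry_SomeD)
  obtain L' where L': "v (fst x) = Some L'" "fst l \<in> P (fst L')" using expand_entry_letter(2)[OF assms(1) el] by blast
  have "block_of (fst l) = fst L" using L L' block_of_eq by simp
  moreover have "fst l \<notin> A" using L' block_not_in_A by blast
  ultimately have "fst L < m" using assms(2) pl by fastforce
  then have "fst x \<in> positions m v" using L(1) unfolding positions_def by blast
  then have "x \<in> {x \<in> ?T. ?C x}" using L el pl by (cases x) (auto simp: rep_length_def)
  then show "p \<in> rat_pair_emb ` {x \<in> ?T. ?C x}" using px by blast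
next
  fix p assume "p \<in> rat_pair_emb ` {x \<in> ?T. ?C x}"
  then obtain x where x: "p = rat_pair_emb x" "x \<in> ?T" "?C x" by blast
  then obtain L where "v (fst x) = Some L" using x unfolding positions_def by (cases x) auto
  then have "expand_entry v x = Some (class_rep (snd L) ! snd x)" using x by (cases x) (auto simp: expand_entry_def rep_length_def)
  then show "p \<in> positions M (expand v)" using x unfolding positions_def
    by (intro CollectI exI[of _ "class_rep (snd L) ! snd x"] conjI) simp_all
qed

lemma proj_expand:
  assumes "is_inf_word block_prod v" "\<And>i. i < M \<Longrightarrow> i \<notin> A \<Longrightarrow> block_of i < m"
  shows "proj M (expand v) = filter (\<lambda>l. fst l < M) (expand_list (proj m v))"
proof -
  let ?T = "{(q,j). q \<in> positions m v \<and> j < rep_length v q}"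
  let ?C = "\<lambda>x. fst (the (expand_entry v x)) < M"
  have fT: "finite ?T" using finite_pairs_below finite_positions[OF assms(1)] by blast
  have pe: "positions M (expand v) = rat_pair_emb ` {x \<in> ?T. ?C x}"
    by (rule positions_expand[OF assms])
  have qs: "\<forall>q\<in>set (sorted_list_of_set (positions m v)). v q \<noteq> None"
    using finite_positions[OF assms(1)] by (auto simp: positions_def)
  have "proj M (expand v) = map (the \<circ> expand v) (map rat_pair_emb (filter ?C (sorted_list_of_set ?T)))"
    unfolding proj_positions pe using sorted_list_of_set_image_strict_mono[OF strict_mono_rat_pair_emb] fT sorted_list_of_set_filter[OF fT] by simp
  also have "\<dots> = map (the \<circ> expand_entry v) (filter ?C (sorted_list_of_set ?T))" by (simp add: comp_def)
  also have "\<dots> = filter (\<lambda>l. fst l < M) (map (the \<circ> expand_entry v) (sorted_list_of_set ?T))"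
    by (simp add: filter_map comp_def)
  also have "\<dots> = filter (\<lambda>l. fst l < M) (map (the \<circ> expand_entry v) (concat (map (\<lambda>q. map (Pair q) [0..<rep_length v q]) (sorted_list_of_set (positions m v)))))"
    using sorted_list_of_set_pairs[OF finite_positions[OF assms(1)], where f = "rep_length v"] by simp
  also have "\<dots> = filter (\<lambda>l. fst l < M) (expand_list (proj m v))"
    unfolding map_expand_entry_concat[OF qs] by (simp add: expand_list_def proj_positions comp_def)
  finally show ?thesis .
qed


lemma class_rep_valid_letter:
  assumes "valid_letter block_prod L"
  shows "class_rep (snd L) \<in> words_over (P (fst L)) G" "fw_class (P (fst L)) G (class_rep (snd L)) = snd L"
    "snd L \<noteq> fw_class (P (fst L)) G []"
  using assms class_rep_carrier[of "snd L" "fst L"] by (auto simp: valid_letter_def block_prod_def free_prod_one)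

lemma expand_list_valid: "valid_word block_prod xs \<Longrightarrow> valid_word G (expand_list xs)"
  by (induction xs) (auto dest: class_rep_valid_letter(1) simp: words_over_def)

lemma block_prod_mult:
  assumes "valid_letter block_prod (n,U)" "valid_letter block_prod (n,V)"
  shows "U \<otimes>\<^bsub>block_prod n\<^esub> V = fw_class (P n) G (class_rep U @ class_rep V)"
proof -
  have u: "class_rep U \<in> words_over (P n) G" "fw_class (P n) G (class_rep U) = U" using class_rep_valid_letter[OF assms(1)] by simp_all
  have v: "class_rep V \<in> words_over (P n) G" "fw_class (P n) G (class_rep V) = V" using class_rep_valid_letter[OF assms(2)] by simp_all
  show ?thesis using free_prod_mult[OF u(1) v(1) groups] u(2) v(2) by (simp add: block_prod_def)
qed

lemma red_step_expand_list:
  assumes "red_step block_prod y z"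
  shows "free_equiv G (expand_list y) (expand_list z)"
  using assms
proof cases
  case (merge ws us n U V)
  have vws: "valid_word G (expand_list ws)" "valid_word G (expand_list us)" using merge(3,4) by (simp_all add: expand_list_valid)
  have uv: "U \<otimes>\<^bsub>block_prod n\<^esub> V = fw_class (P n) G (class_rep U @ class_rep V)" using block_prod_mult merge(5,6) by blast
  have vuv: "valid_letter block_prod (n, U \<otimes>\<^bsub>block_prod n\<^esub> V)"
    using merge groups_block_prod[of n] by (simp add: valid_letter_def group.is_monoid monoid.m_closed)
  have w: "class_rep U @ class_rep V \<in> words_over (P n) G"
    using class_rep_valid_letter(1)[OF merge(5)] class_rep_valid_letter(1)[OF merge(6)] words_over_append by simp
  have "fw_class (P n) G (class_rep U @ class_rep V) = fw_class (P n) G (class_rep (U \<otimes>\<^bsub>block_prod n\<^esub> V))"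
    using class_rep_valid_letter(2)[OF vuv] uv by simp
  then have "free_equiv G (class_rep U @ class_rep V) (class_rep (U \<otimes>\<^bsub>block_prod n\<^esub> V))" using fw_class_eqD[OF _ w] by blast
  then have "free_equiv G (expand_list ws @ (class_rep U @ class_rep V) @ expand_list us) (expand_list ws @ class_rep (U \<otimes>\<^bsub>block_prod n\<^esub> V) @ expand_list us)"
    by (rule free_equiv_context[OF _ vws])
  then show ?thesis using merge by simp
next
  case (cancel ws us n U V)
  have vws: "valid_word G (expand_list ws)" "valid_word G (expand_list us)" using cancel(3,4) by (simp_all add: expand_list_valid)
  have uv: "U \<otimes>\<^bsub>block_prod n\<^esub> V = fw_class (P n) G (class_rep U @ class_rep V)" using block_prod_mult cancel(5,6) by blast
  have w: "class_rep U @ class_rep V \<in> words_over (P n) G"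
    using class_rep_valid_letter(1)[OF cancel(5)] class_rep_valid_letter(1)[OF cancel(6)] words_over_append by simp
  have "fw_class (P n) G (class_rep U @ class_rep V) = fw_class (P n) G []"
    using cancel uv by (simp add: block_prod_def free_prod_one)
  then have "free_equiv G (class_rep U @ class_rep V) []" using fw_class_eqD[OF _ w] by blast
  then have "free_equiv G (expand_list ws @ (class_rep U @ class_rep V) @ expand_list us) (expand_list ws @ [] @ expand_list us)"
    by (rule free_equiv_context[OF _ vws])
  then show ?thesis using cancel by simp
qed

lemma free_equiv_expand_list:
  assumes "free_equiv block_prod x y"
  shows "free_equiv G (expand_list x) (expand_list y)"
  using assms equivp_free_equiv by (rule free_equiv_map) (rule red_step_expand_list)

lemma proj_expand_block_bound:
  assumes "is_inf_word block_prod v"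
  shows "proj M (expand v) = filter (\<lambda>l. fst l < M) (expand_list (proj (block_bound M) v))"
  using proj_expand[OF assms] block_of_less_block_bound by blast

lemma expand_inf_equiv:
  assumes "inf_equiv block_prod v v'" "is_inf_word block_prod v" "is_inf_word block_prod v'"
  shows "inf_equiv G (expand v) (expand v')"
  unfolding inf_equiv_def
proof
  fix M
  have "free_equiv block_prod (proj (block_bound M) v) (proj (block_bound M) v')" using assms(1) by (simp add: inf_equiv_def)
  then have "free_equiv G (expand_list (proj (block_bound M) v)) (expand_list (proj (block_bound M) v'))" by (rule free_equiv_expand_list)
  then show "free_equiv G (proj M (expand v)) (proj M (expand v'))"
    unfolding proj_expand_block_bound[OF assms(2)] proj_expand_block_bound[OF assms(3)] by (rule free_equiv_filter)
qed

lemma expand_concat_word: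
  assumes "is_inf_word block_prod v" "is_inf_word block_prod v'"
  shows "inf_equiv G (expand (concat_word v v')) (concat_word (expand v) (expand v'))"
proof (rule inf_equivI)
  fix M
  show "proj M (expand (concat_word v v')) = proj M (concat_word (expand v) (expand v'))"
    using proj_expand_block_bound[OF concat_word_inf_word[OF assms]] proj_concat_word[OF assms] proj_expand_block_bound[OF assms(1)] proj_expand_block_bound[OF assms(2)]
      proj_concat_word[OF expand_inf_word[OF assms(1)] expand_inf_word[OF assms(2)]]
    by simp
qed

lemma expand_finite:
  assumes "finite {q. v q \<noteq> None}"
  shows "finite {p. expand v p \<noteq> None}"
proof -
  have "{p. expand v p \<noteq> None} \<subseteq> rat_pair_emb ` {(q,j). q \<in> {q. v q \<noteq> None} \<and> j < rep_length v q}"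
  proof
    fix p assume "p \<in> {p. expand v p \<noteq> None}"
    then obtain x where px: "p = rat_pair_emb x" "expand_entry v x \<noteq> None" using expand_cases by fastforce
    then obtain l where "expand_entry v x = Some l" by blast
    then obtain L where "v (fst x) = Some L" "snd x < length (class_rep (snd L))" by (rule expand_entry_SomeD)
    then have "x \<in> {(q,j). q \<in> {q. v q \<noteq> None} \<and> j < rep_length v q}" by (cases x) (simp add: rep_length_def)
    then show "p \<in> rat_pair_emb ` {(q,j). q \<in> {q. v q \<noteq> None} \<and> j < rep_length v q}" using px by blast
  qed
  moreover have "finite (rat_pair_emb ` {(q,j). q \<in> {q. v q \<noteq> None} \<and> j < rep_length v q})"
    using finite_pairs_below[OF assms] by blast
  ultimately show ?thesis by (rule finite_subset)
qed


section \<open>Collapse and expand are inverse up to the letters from \<open>A\<close>\<close>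

lemma expand_list_letters:
  assumes "valid_word block_prod xs" "l \<in> set (expand_list xs)"
  shows "fst l \<notin> A \<and> valid_letter G l"
  using assms
proof (induction xs)
  case (Cons L xs)
  have v: "valid_letter block_prod L" "valid_word block_prod xs" using Cons.prems by simp_all
  have r: "class_rep (snd L) \<in> words_over (P (fst L)) G" using class_rep_valid_letter[OF v(1)] by simp
  show ?case
  proof (cases "l \<in> set (class_rep (snd L))")
    case True
    then have "fst l \<in> P (fst L)" "valid_letter G l" using r by (auto simp: words_over_def valid_word_def)
    then show ?thesis using block_not_in_A by blast
  next
    case False
    then show ?thesis using Cons.IH[OF v(2)] Cons.prems(2) by simp
  qed
qed simp

lemma valid_word_map_lift_letter:
  assumes "\<And>l. l \<in> set y \<Longrightarrow> fst l \<notin> A \<and> valid_letter G l"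
  shows "valid_word block_prod (map lift_letter y)"
  using assms lift_letter_valid by (auto simp: valid_word_def)

lemma map_lift_letter_expand_list:
  assumes "valid_word block_prod xs"
  shows "free_equiv block_prod (map lift_letter (expand_list xs)) xs"
  using assms
proof (induction xs)
  case Nil then show ?case by simp
next
  case (Cons L xs)
  have v: "valid_letter block_prod L" "valid_word block_prod xs" using Cons.prems by simp_all
  obtain n U where L: "L = (n,U)" by fastforce
  have r: "class_rep U \<in> words_over (P n) G" "fw_class (P n) G (class_rep U) = U" "U \<noteq> fw_class (P n) G []"
    using class_rep_valid_letter[OF v(1)] L by simp_all
  have "free_equiv block_prod (map lift_letter (class_rep U)) [(n, U)]"
    using free_equiv_map_lift_letter[OF r(1)] r(2,3)
    by (simp add: letter_word_def block_prod_def free_prod_one)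
  then have "free_equiv block_prod (map lift_letter (class_rep U) @ map lift_letter (expand_list xs)) ([(n, U)] @ xs)"
    by (rule free_equiv_append[OF _ Cons.IH[OF v(2)] map_lift_letter_valid[OF r(1)] _ groups_block_prod])
       (rule valid_word_map_lift_letter, rule expand_list_letters[OF v(2)])
  then show ?case using L by simp
qed

lemma collapse_list_expand_list_filter:
  assumes "valid_word block_prod xs"
  shows "collapse_list (filter (\<lambda>l. block_of (fst l) < m) (filter (\<lambda>l. fst l < index_bound m) (expand_list xs)))
       = map lift_letter (expand_list (filter (\<lambda>L. fst L < m) xs))"
  using assms
proof (induction xs)
  case Nil then show ?case by simp
next
  case (Cons L xs)
  have v: "valid_letter block_prod L" "valid_word block_prod xs" using Cons.prems by simp_all
  have r: "class_rep (snd L) \<in> words_over (P (fst L)) G" using class_rep_valid_letter[OF v(1)] by simp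
  have inP: "\<forall>l\<in>set (class_rep (snd L)). fst l \<in> P (fst L)" using r by (simp add: words_over_def)
  have e: "collapse_list (filter (\<lambda>l. block_of (fst l) < m) (filter (\<lambda>l. fst l < index_bound m) (class_rep (snd L))))
     = (if fst L < m then map lift_letter (class_rep (snd L)) else [])"
  proof (cases "fst L < m")
    case True
    have "filter (\<lambda>l. fst l < index_bound m) (class_rep (snd L)) = class_rep (snd L)"
      using inP True block_of_eq block_not_in_A less_index_bound by (auto intro!: filter_True)
    moreover have "filter (\<lambda>l. block_of (fst l) < m) (class_rep (snd L)) = class_rep (snd L)"
      using inP True block_of_eq by (auto intro!: filter_True)
    moreover have "filter (\<lambda>l. fst l \<notin> A) (class_rep (snd L)) = class_rep (snd L)"
      using inP block_not_in_A by (auto intro!: filter_True)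
    ultimately show ?thesis using True by (simp add: collapse_list_def)
  next
    case False
    have "filter (\<lambda>l. block_of (fst l) < m) (filter (\<lambda>l. fst l < index_bound m) (class_rep (snd L))) = []"
      using inP False block_of_eq by (auto simp: filter_empty_conv)
    then show ?thesis using False by simp
  qed
  show ?case using e Cons.IH[OF v(2)] by (simp add: collapse_list_def)
qed

lemma collapse_expand:
  assumes "is_inf_word block_prod v"
  shows "inf_equiv block_prod (collapse (expand v)) v"
  unfolding inf_equiv_def
proof
  fix m
  let ?K = "index_bound m"
  let ?m' = "max m (block_bound ?K)"
  have pv: "is_inf_word G (expand v)" using expand_inf_word[OF assms] .
  have "proj ?K (expand v) = filter (\<lambda>l. fst l < ?K) (expand_list (proj ?m' v))"
    by (rule proj_expand[OF assms]) (use block_of_less_block_bound in \<open>fastforce\<close>)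
  then have "proj m (collapse (expand v)) = collapse_list (filter (\<lambda>l. block_of (fst l) < m) (filter (\<lambda>l. fst l < ?K) (expand_list (proj ?m' v))))"
    using proj_collapse_index_bound[OF pv] by simp
  also have "\<dots> = map lift_letter (expand_list (filter (\<lambda>L. fst L < m) (proj ?m' v)))"
    by (rule collapse_list_expand_list_filter[OF proj_valid[OF assms]])
  also have "\<dots> = map lift_letter (expand_list (proj m v))"
    using proj_le[OF assms, of m ?m'] by simp
  finally show "free_equiv block_prod (proj m (collapse (expand v))) (proj m v)"
    using map_lift_letter_expand_list[OF proj_valid[OF assms]] by simp
qed

definition remove_A :: "'a iword \<Rightarrow> 'a iword" where
  "remove_A w q = (case w q of None \<Rightarrow> None | Some l \<Rightarrow> if fst l \<in> A then None else Some l)"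

lemma remove_A_inf_word:
  assumes "is_inf_word G w"
  shows "is_inf_word G (remove_A w)"
proof (rule is_inf_wordI)
  fix q l assume "remove_A w q = Some l"
  then have "w q = Some l" by (auto simp: remove_A_def split: option.splits if_splits)
  then show "valid_letter G l" by (rule inf_word_valid_letter[OF assms])
next
  fix n
  have "{q. \<exists>l. remove_A w q = Some l \<and> fst l = n} \<subseteq> {q. \<exists>l. w q = Some l \<and> fst l = n}"
    by (auto simp: remove_A_def split: option.splits if_splits)
  then show "finite {q. \<exists>l. remove_A w q = Some l \<and> fst l = n}"
    using inf_word_finite_index[OF assms] by (rule finite_subset)
qed

lemma proj_remove_A:
  assumes "is_inf_word G w" "M \<le> K"
  shows "proj M (remove_A w) = filter (\<lambda>l. fst l < M \<and> fst l \<notin> A) (proj K w)"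
proof -
  have "positions M (remove_A w) = {q \<in> positions K w. fst (the (w q)) < M \<and> fst (the (w q)) \<notin> A}"
  proof (rule equalityI; rule subsetI)
    fix q assume "q \<in> positions M (remove_A w)"
    then obtain l where l: "remove_A w q = Some l" "fst l < M" unfolding positions_def by blast
    then have wl: "w q = Some l" "fst l \<notin> A" by (auto simp: remove_A_def split: option.splits if_splits)
    have "q \<in> positions K w" unfolding positions_def using wl l assms(2) by (intro CollectI exI[of _ l] conjI) simp_all
    then show "q \<in> {q \<in> positions K w. fst (the (w q)) < M \<and> fst (the (w q)) \<notin> A}" using wl l by simp
  next
    fix q assume q: "q \<in> {q \<in> positions K w. fst (the (w q)) < M \<and> fst (the (w q)) \<notin> A}"
    then obtain l where wl: "w q = Some l" unfolding positions_def by blast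
    then have "remove_A w q = Some l" "fst l < M" using q by (simp_all add: remove_A_def)
    then show "q \<in> positions M (remove_A w)" unfolding positions_def by (intro CollectI exI[of _ l] conjI)
  qed
  moreover have "the (remove_A w q) = the (w q)" if "q \<in> positions K w" "fst (the (w q)) \<notin> A" for q
    using that by (auto simp: remove_A_def positions_def)
  ultimately have "proj M (remove_A w) = map (the \<circ> w) (sorted_list_of_set {q \<in> positions K w. fst (the (w q)) < M \<and> fst (the (w q)) \<notin> A})"
    using finite_positions[OF assms(1), of K] by (simp add: proj_positions)
  then show ?thesis
    using proj_filter_positions[OF finite_positions[OF assms(1)], where C = "\<lambda>l. fst l < M \<and> fst l \<notin> A"] by simp
qed

lemma expand_list_map_lift_letter:
  assumes "valid_word G ys" "\<forall>l\<in>set ys. fst l \<notin> A"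
  shows "free_equiv G (expand_list (map lift_letter ys)) ys"
  using assms
proof (induction ys)
  case Nil then show ?case by simp
next
  case (Cons l ys)
  have vl: "valid_letter G l" "fst l \<notin> A" using Cons.prems by simp_all
  have vL: "valid_letter block_prod (lift_letter l)" using lift_letter_valid[OF vl] .
  have w: "class_rep (snd (lift_letter l)) \<in> words_over (P (block_of (fst l))) G"
    "fw_class (P (block_of (fst l))) G (class_rep (snd (lift_letter l))) = fw_class (P (block_of (fst l))) G [l]"
    using class_rep_valid_letter[OF vL] by (simp_all add: lift_letter_def)
  have "free_equiv G (class_rep (snd (lift_letter l))) [l]" using fw_class_eqD[OF w(2) w(1)] .
  then have "free_equiv G (class_rep (snd (lift_letter l)) @ expand_list (map lift_letter ys)) ([l] @ ys)"
  proof (rule free_equiv_append[OF _ Cons.IH _ _ groups])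
    show "valid_word G ys" "\<forall>l\<in>set ys. fst l \<notin> A" using Cons.prems by simp_all
    show "valid_word G (class_rep (snd (lift_letter l)))" using w(1) by (simp add: words_over_def)
    have "valid_word block_prod (map lift_letter ys)" by (rule valid_word_map_lift_letter) (use Cons.prems in \<open>auto simp: valid_word_def\<close>)
    then show "valid_word G (expand_list (map lift_letter ys))" by (rule expand_list_valid)
  qed
  then show ?case by simp
qed

lemma expand_collapse:
  assumes "is_inf_word G w"
  shows "inf_equiv G (expand (collapse w)) (remove_A w)"
  unfolding inf_equiv_def
proof
  fix M
  let ?m = "block_bound M"
  let ?K = "max (index_bound ?m) M"
  let ?ys = "filter (\<lambda>l. fst l \<notin> A \<and> block_of (fst l) < ?m) (proj ?K w)"
  have pw: "is_inf_word block_prod (collapse w)" using collapse_inf_word[OF assms] .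
  have "proj M (expand (collapse w)) = filter (\<lambda>l. fst l < M) (expand_list (proj ?m (collapse w)))"
    by (rule proj_expand_block_bound[OF pw])
  also have "proj ?m (collapse w) = map lift_letter ?ys"
    by (rule proj_collapse[OF assms]) (use less_index_bound in \<open>fastforce\<close>)
  finally have e: "proj M (expand (collapse w)) = filter (\<lambda>l. fst l < M) (expand_list (map lift_letter ?ys))" .
  have vys: "valid_word G ?ys" using proj_valid[OF assms, of ?K] by (simp add: valid_word_def)
  have "free_equiv G (expand_list (map lift_letter ?ys)) ?ys" by (rule expand_list_map_lift_letter[OF vys]) simp
  then have "free_equiv G (filter (\<lambda>l. fst l < M) (expand_list (map lift_letter ?ys))) (filter (\<lambda>l. fst l < M) ?ys)"
    by (rule free_equiv_filter)
  moreover have "filter (\<lambda>l. fst l < M) ?ys = proj M (remove_A w)"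
    unfolding proj_remove_A[OF assms, of M ?K, simplified] using block_of_less_block_bound
    by (auto intro!: filter_cong)
  ultimately show "free_equiv G (proj M (expand (collapse w))) (proj M (remove_A w))" using e by simp
qed

section \<open>The induced isomorphism of archipelago groups\<close>

definition collapse_class :: "'a iword set \<Rightarrow> 'a block_iword set" where
  "collapse_class U = iw_class block_prod (collapse (SOME w. w \<in> U))"

definition expand_class :: "'a block_iword set \<Rightarrow> 'a iword set" where
  "expand_class V = iw_class G (expand (SOME v. v \<in> V))"

lemma collapse_class_iw_class:
  assumes "is_inf_word G w"
  shows "collapse_class (iw_class G w) = iw_class block_prod (collapse w)"
proof -
  let ?x = "SOME x. x \<in> iw_class G w"
  have "is_inf_word G ?x" "inf_equiv G w ?x" using iw_class_some[OF assms] by simp_all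
  then have "inf_equiv block_prod (collapse w) (collapse ?x)" using collapse_inf_equiv assms by blast
  then show ?thesis unfolding collapse_class_def using iw_class_eqI inf_equiv_sym by metis
qed

lemma expand_class_iw_class:
  assumes "is_inf_word block_prod v"
  shows "expand_class (iw_class block_prod v) = iw_class G (expand v)"
proof -
  let ?x = "SOME x. x \<in> iw_class block_prod v"
  have "is_inf_word block_prod ?x" "inf_equiv block_prod v ?x" using iw_class_some[OF assms] by simp_all
  then have "inf_equiv G (expand v) (expand ?x)" using expand_inf_equiv assms by blast
  then show ?thesis unfolding expand_class_def using iw_class_eqI inf_equiv_sym by metis
qed

lemma collapse_class_hom: "collapse_class \<in> hom (top_prod G) (top_prod block_prod)"
proof (rule homI)
  fix U assume "U \<in> carrier (top_prod G)"
  then obtain w where w: "is_inf_word G w" "U = iw_class G w" by (auto simp: top_prod_carrier)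
  then show "collapse_class U \<in> carrier (top_prod block_prod)" using collapse_class_iw_class collapse_inf_word by (auto simp: top_prod_carrier)
next
  fix U V assume "U \<in> carrier (top_prod G)" "V \<in> carrier (top_prod G)"
  then obtain w v where w: "is_inf_word G w" "U = iw_class G w" "is_inf_word G v" "V = iw_class G v"
    by (auto simp: top_prod_carrier)
  have "collapse_class (U \<otimes>\<^bsub>top_prod G\<^esub> V) = iw_class block_prod (collapse (concat_word w v))"
    using w top_prod_mult[OF w(1,3) groups] collapse_class_iw_class[OF concat_word_inf_word[OF w(1,3)]] by simp
  also have "\<dots> = collapse_class U \<otimes>\<^bsub>top_prod block_prod\<^esub> collapse_class V"
    using w top_prod_mult[OF collapse_inf_word[OF w(1)] collapse_inf_word[OF w(3)] groups_block_prod] collapse_class_iw_class by (simp add: collapse_concat_word)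
  finally show "collapse_class (U \<otimes>\<^bsub>top_prod G\<^esub> V) = collapse_class U \<otimes>\<^bsub>top_prod block_prod\<^esub> collapse_class V" .
qed

lemma expand_class_hom: "expand_class \<in> hom (top_prod block_prod) (top_prod G)"
proof (rule homI)
  fix U assume "U \<in> carrier (top_prod block_prod)"
  then obtain w where w: "is_inf_word block_prod w" "U = iw_class block_prod w" by (auto simp: top_prod_carrier)
  then show "expand_class U \<in> carrier (top_prod G)" using expand_class_iw_class expand_inf_word by (auto simp: top_prod_carrier)
next
  fix U V assume "U \<in> carrier (top_prod block_prod)" "V \<in> carrier (top_prod block_prod)"
  then obtain w v where w: "is_inf_word block_prod w" "U = iw_class block_prod w" "is_inf_word block_prod v" "V = iw_class block_prod v"
    by (auto simp: top_prod_carrier)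
  have "expand_class (U \<otimes>\<^bsub>top_prod block_prod\<^esub> V) = iw_class G (expand (concat_word w v))"
    using w top_prod_mult[OF w(1,3) groups_block_prod] expand_class_iw_class[OF concat_word_inf_word[OF w(1,3)]] by simp
  also have "\<dots> = iw_class G (concat_word (expand w) (expand v))"
    using expand_concat_word[OF w(1,3)] by (rule iw_class_eqI)
  also have "\<dots> = expand_class U \<otimes>\<^bsub>top_prod G\<^esub> expand_class V"
    using w top_prod_mult[OF expand_inf_word[OF w(1)] expand_inf_word[OF w(3)] groups] expand_class_iw_class by simp
  finally show "expand_class (U \<otimes>\<^bsub>top_prod block_prod\<^esub> V) = expand_class U \<otimes>\<^bsub>top_prod G\<^esub> expand_class V" .
qed

lemma collapse_class_free_prod_sub: "collapse_class ` free_prod_sub G \<subseteq> free_prod_sub block_prod"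
proof
  fix X assume "X \<in> collapse_class ` free_prod_sub G"
  then obtain w where w: "is_inf_word G w" "finite {q. w q \<noteq> None}" "X = collapse_class (iw_class G w)"
    by (auto simp: free_prod_sub_def)
  then show "X \<in> free_prod_sub block_prod"
    using collapse_class_iw_class collapse_inf_word collapse_finite by (auto simp: free_prod_sub_def)
qed

lemma expand_class_free_prod_sub: "expand_class ` free_prod_sub block_prod \<subseteq> free_prod_sub G"
proof
  fix X assume "X \<in> expand_class ` free_prod_sub block_prod"
  then obtain w where w: "is_inf_word block_prod w" "finite {q. w q \<noteq> None}" "X = expand_class (iw_class block_prod w)"
    by (auto simp: free_prod_sub_def)
  then show "X \<in> free_prod_sub G"
    using expand_class_iw_class expand_inf_word expand_finite by (auto simp: free_prod_sub_def)
qed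

lemma collapse_class_expand_class:
  assumes "V \<in> carrier (top_prod block_prod)"
  shows "collapse_class (expand_class V) = V"
proof -
  obtain v where v: "is_inf_word block_prod v" "V = iw_class block_prod v" using assms by (auto simp: top_prod_carrier)
  then show ?thesis using expand_class_iw_class collapse_class_iw_class expand_inf_word iw_class_eqI[OF collapse_expand[OF v(1)]] by simp
qed

lemma group_hom_collapse_class: "group_hom (top_prod G) (top_prod block_prod) collapse_class"
  using collapse_class_hom group_top_prod[OF groups] group_top_prod[OF groups_block_prod]
  by (intro group_hom.intro group_hom_axioms.intro)

lemma collapse_class_surj: "collapse_class ` carrier (top_prod G) = carrier (top_prod block_prod)"
proof
  show "collapse_class ` carrier (top_prod G) \<subseteq> carrier (top_prod block_prod)"
    using collapse_class_hom by (auto simp: hom_def)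
  show "carrier (top_prod block_prod) \<subseteq> collapse_class ` carrier (top_prod G)"
    using expand_class_hom collapse_class_expand_class by (force simp: hom_def)
qed

lemma collapse_class_free_normal_closure:
  "collapse_class ` free_normal_closure G \<subseteq> free_normal_closure block_prod"
  unfolding free_normal_closure_def
  by (rule group_hom.normal_closure_image[OF group_hom_collapse_class free_prod_sub_carrier
        free_prod_sub_carrier collapse_class_free_prod_sub])

lemma expand_class_free_normal_closure:
  "expand_class ` free_normal_closure block_prod \<subseteq> free_normal_closure G"
proof -
  have "group_hom (top_prod block_prod) (top_prod G) expand_class"
    using expand_class_hom group_top_prod[OF groups] group_top_prod[OF groups_block_prod]
    by (intro group_hom.intro group_hom_axioms.intro)
  then show ?thesis
    unfolding free_normal_closure_def
    by (rule group_hom.normal_closure_image[OF _ free_prod_sub_carrier free_prod_sub_carrier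
          expand_class_free_prod_sub])
qed

lemma remove_A_free_normal_closure:
  assumes "is_inf_word G w"
  shows "iw_class G (remove_A w) \<otimes>\<^bsub>top_prod G\<^esub> inv\<^bsub>top_prod G\<^esub> iw_class G w \<in> free_normal_closure G"
proof -
  have "{q. \<exists>l. w q = Some l \<and> fst l \<in> A} = (\<Union>n\<in>A. {q. \<exists>l. w q = Some l \<and> fst l = n})" by blast
  then have "finite {q. \<exists>l. w q = Some l \<and> fst l \<in> A}"
    using finA inf_word_finite_index[OF assms] by simp
  moreover have "remove_A w = restrict_word (-{q. \<exists>l. w q = Some l \<and> fst l \<in> A}) w"
    by (rule ext) (auto simp: remove_A_def restrict_word_def split: option.splits)
  ultimately show ?thesis using delete_finite_positions_in_closure[OF _ assms groups] by simp
qed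

text \<open>Since \<open>expand_class \<circ> collapse_class\<close> deletes the finitely many letters from \<open>A\<close>,
  it is the identity modulo the free product; this makes the preimage of the normal closure
  no larger than the normal closure.\<close>

lemma vimage_collapse_class_free_normal_closure:
  "{U \<in> carrier (top_prod G). collapse_class U \<in> free_normal_closure block_prod} = free_normal_closure G"
proof
  interpret N: normal "free_normal_closure G" "top_prod G"
    by (rule free_normal_closure_normal[OF groups])
  show "{U \<in> carrier (top_prod G). collapse_class U \<in> free_normal_closure block_prod} \<subseteq> free_normal_closure G"
  proof clarify
    fix U assume U: "U \<in> carrier (top_prod G)" "collapse_class U \<in> free_normal_closure block_prod"
    then obtain w where w: "is_inf_word G w" "U = iw_class G w" by (auto simp: top_prod_carrier)
    let ?d = "iw_class G (remove_A w)"
    have "expand_class (collapse_class U) = ?d"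
      using w collapse_class_iw_class expand_class_iw_class collapse_inf_word
        iw_class_eqI[OF expand_collapse[OF w(1)]] by simp
    then have d: "?d \<in> free_normal_closure G"
      using expand_class_free_normal_closure U(2) by blast
    have d_carr: "?d \<in> carrier (top_prod G)"
      using remove_A_inf_word[OF w(1)] by (auto simp: top_prod_carrier)
    have "inv\<^bsub>top_prod G\<^esub> (?d \<otimes>\<^bsub>top_prod G\<^esub> inv\<^bsub>top_prod G\<^esub> U) \<otimes>\<^bsub>top_prod G\<^esub> ?d \<in> free_normal_closure G"
      using remove_A_free_normal_closure[OF w(1)] w(2) d by simp
    moreover have "inv\<^bsub>top_prod G\<^esub> (?d \<otimes>\<^bsub>top_prod G\<^esub> inv\<^bsub>top_prod G\<^esub> U) \<otimes>\<^bsub>top_prod G\<^esub> ?d = U"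
      using d_carr U(1) by (simp add: N.inv_mult_group N.m_assoc)
    ultimately show "U \<in> free_normal_closure G" by simp
  qed
  show "free_normal_closure G \<subseteq> {U \<in> carrier (top_prod G). collapse_class U \<in> free_normal_closure block_prod}"
    using collapse_class_free_normal_closure N.subset by blast
qed

theorem archipelago_iso_block_prod: "archipelago G \<cong> archipelago block_prod"
proof -
  have "top_prod G Mod free_normal_closure G \<cong> top_prod block_prod Mod free_normal_closure block_prod"
    using group_hom.FactGroup_iso_vimage[OF group_hom_collapse_class
        free_normal_closure_normal[OF groups_block_prod] collapse_class_surj]
    unfolding vimage_collapse_class_free_normal_closure .
  then show ?thesis by (simp add: archipelago_def free_normal_closure_def)
qed

end

theorem proposition18:
  fixes G :: "nat \<Rightarrow> ('a, 'b) monoid_scheme"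
    and A :: "nat set"
    and P :: "nat \<Rightarrow> nat set"
  assumes groups: "\<And>n. group (G n)"
    and finA: "finite A"
    and finP: "\<And>n. finite (P n)"
    and nonempty: "\<And>n. P n \<noteq> {}"
    and disj: "\<And>m n. m \<noteq> n \<Longrightarrow> P m \<inter> P n = {}"
    and cover: "(\<Union>n. P n) = UNIV - A"
  shows "archipelago G \<cong> archipelago (\<lambda>n. free_prod (P n) G)"
proof -
  interpret block_partition G A P
    by (rule block_partition.intro) (use groups finA finP disj cover in auto)
  have "(\<lambda>n. free_prod (P n) G) = block_prod" by (rule ext) (simp add: block_prod_def)
  then show ?thesis using archipelago_iso_block_prod by simp
qed

end
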